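(* Let $d$ be a positive square-free integer, $K=\mathbb{Q}(\sqrt{-d})$, $\mathcal{O}$ its ring of integers, $R$ the set of roots of unity in $K$, $K_1=\{z\in K: z\overline z=1\}$, and $F(d)=\min_{z\in K_1\setminus R}d(z)$. Let $\mathcal{J}$ be the set of proper nonzero ideals $\pi$ of $\mathcal{O}$ such that $\pi$ and $\overline\pi$ are coprime and $\pi^2$ is principal. Then $$F(d)=\min_{\pi\in\mathcal{J}}N_{K/\mathbb{Q}}(\pi).$$ In particular $F(1)=5$ and $F(3)=7$.
   Context: For $z\in K^*$, $\pi_z=\{a\in\mathcal{O}: az\in\mathcal{O}\}$ and $d(z)=N_{K/\mathbb{Q}}(\pi_z)=\mathrm{Card}\,\mathcal{O}/\pi_z$. $\overline{\pi}$ denotes the complex conjugate ideal. *)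

theory Defs
  imports "HOL-Analysis.Analysis" "HOL-Computational_Algebra.Computational_Algebra"
begin

definition QF :: "nat \<Rightarrow> complex set" where
  "QF d = {of_rat a + of_rat b * (\<i> * complex_of_real (sqrt (real d))) | a b. True}"

definition OK :: "nat \<Rightarrow> complex set" where
  "OK d = {x \<in> QF d. algebraic_int x}"

definition roots_unity :: "nat \<Rightarrow> complex set" where
  "roots_unity d = {z \<in> QF d. \<exists>n>0. z ^ n = 1}"

definition K1 :: "nat \<Rightarrow> complex set" where
  "K1 d = {z \<in> QF d. z * cnj z = 1}"

definition is_ideal :: "nat \<Rightarrow> complex set \<Rightarrow> bool" where
  "is_ideal d I \<longleftrightarrow> I \<subseteq> OK d \<and> 0 \<in> I \<and> (\<forall>x\<in>I. \<forall>y\<in>I. x + y \<in> I)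
     \<and> (\<forall>a\<in>OK d. \<forall>x\<in>I. a * x \<in> I)"

definition ideal_gen :: "nat \<Rightarrow> complex set \<Rightarrow> complex set" where
  "ideal_gen d S = \<Inter>{I. is_ideal d I \<and> S \<subseteq> I}"

definition ideal_mult :: "nat \<Rightarrow> complex set \<Rightarrow> complex set \<Rightarrow> complex set" where
  "ideal_mult d I J = ideal_gen d {x * y | x y. x \<in> I \<and> y \<in> J}"

definition principal :: "nat \<Rightarrow> complex set \<Rightarrow> bool" where
  "principal d I \<longleftrightarrow> (\<exists>a\<in>OK d. I = {a * x | x. x \<in> OK d})"

definition conj_ideal :: "complex set \<Rightarrow> complex set" where
  "conj_ideal I = cnj ` I"

text \<open>Absolute norm N(I) = Card(O / I), the number of cosets of I in O.\<close>
definition ideal_norm :: "nat \<Rightarrow> complex set \<Rightarrow> nat" where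
  "ideal_norm d I = card ((\<lambda>x. (\<lambda>y. x + y) ` I) ` OK d)"

definition pi_z :: "nat \<Rightarrow> complex \<Rightarrow> complex set" where
  "pi_z d z = {a \<in> OK d. a * z \<in> OK d}"

definition dz :: "nat \<Rightarrow> complex \<Rightarrow> nat" where
  "dz d z = ideal_norm d (pi_z d z)"

text \<open>F(d) = min (as Inf on nat, which is attained when nonempty) over z in K_1 minus R of d(z).\<close>
definition F :: "nat \<Rightarrow> nat" where
  "F d = Inf (dz d ` (K1 d - roots_unity d))"

definition JJ :: "nat \<Rightarrow> complex set set" where
  "JJ d = {I. is_ideal d I \<and> I \<noteq> {0} \<and> I \<noteq> OK d
             \<and> ideal_gen d (I \<union> conj_ideal I) = OK d
             \<and> principal d (ideal_mult d I I)}"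

end

theory Submission
  imports Defs
begin

text \<open>
  For z in K_1 minus R the ideal pi_z is proper and nonzero, and the relation z conj(z) = 1 gives
  conj(pi_z) = z pi_z.  Hence pi_z^2 = conj(z) pi_z conj(pi_z) = (conj(z) n) with n = N(pi_z),
  and 1 lies in pi_z + conj(pi_z) because, for m z integral and L = (m, m z), every element of
  L conj(L) / n lies there.  Conversely, if pi^2 = (alpha) and pi conj(pi) = (n), then
  alpha conj(alpha) = n^2, and z = conj(alpha) / n lies in K_1 with pi_z = pi by coprimality; z is
  not a root of unity since pi is proper.  So pi_z maps K_1 minus R onto J and F(d) is the least
  norm in J.  The values F(1) = 5 and F(3) = 7 are attained at (3 + 4i) / 5 and
  (1 + 4 sqrt(-3)) / 7.  Conversely, some j \<le> d(z) makes j z integral, so 2 j z = A + B sqrt(-d)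
  with A^2 + d B^2 = 4 j^2; for j below the claimed value every such solution is divisible by j,
  which would make z integral, hence a root of unity.
\<close>

section \<open>The field K and the order Z[sqrt(-d)]\<close>

definition sqrt_neg :: "nat \<Rightarrow> complex" where
  "sqrt_neg d = \<i> * complex_of_real (sqrt (real d))"

lemma sqrt_neg_mult_self: "sqrt_neg d * sqrt_neg d = - of_nat d"
proof -
  have "complex_of_real (sqrt (real d)) * complex_of_real (sqrt (real d)) = of_nat d"
    by (simp flip: of_real_mult)
  then show ?thesis by (simp add: sqrt_neg_def algebra_simps)
qed

lemma sqrt_neg_mult_self_left: "sqrt_neg d * (sqrt_neg d * x) = - of_nat d * x"
  by (simp add: sqrt_neg_mult_self flip: mult.assoc)

lemma cnj_sqrt_neg [simp]: "cnj (sqrt_neg d) = - sqrt_neg d"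
  by (simp add: sqrt_neg_def)

lemma sqrt_neg_mult_expand:
  "(a + b * sqrt_neg d) * (a' + b' * sqrt_neg d)
     = (a * a' - of_nat d * b * b') + (a * b' + b * a') * sqrt_neg d"
proof -
  have "(a + b * sqrt_neg d) * (a' + b' * sqrt_neg d)
      = a * a' + b * b' * (sqrt_neg d * sqrt_neg d) + (a * b' + b * a') * sqrt_neg d"
    by (simp add: algebra_simps)
  then show ?thesis by (simp add: sqrt_neg_mult_self)
qed

lemma of_real_of_rat: "complex_of_real (of_rat q) = of_rat q"
  by (cases q) (simp add: of_rat_rat)

lemma QF_iff: "x \<in> QF d \<longleftrightarrow> (\<exists>a\<in>\<rat>. \<exists>b\<in>\<rat>. x = of_real a + of_real b * sqrt_neg d)"
proof
  assume "x \<in> QF d"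
  then obtain p q where "x = of_real (of_rat p) + of_real (of_rat q) * sqrt_neg d"
    by (auto simp: QF_def sqrt_neg_def of_real_of_rat)
  then show "\<exists>a\<in>\<rat>. \<exists>b\<in>\<rat>. x = of_real a + of_real b * sqrt_neg d"
    using Rats_of_rat by blast
next
  assume "\<exists>a\<in>\<rat>. \<exists>b\<in>\<rat>. x = of_real a + of_real b * sqrt_neg d"
  then obtain p q where "x = of_real (of_rat p) + of_real (of_rat q) * sqrt_neg d"
    by (auto elim!: Rats_cases)
  then show "x \<in> QF d" by (auto simp: QF_def sqrt_neg_def of_real_of_rat)
qed

lemma QF_add: "x \<in> QF d \<Longrightarrow> y \<in> QF d \<Longrightarrow> x + y \<in> QF d"
proof (unfold QF_iff, elim bexE)
  fix a b a' b'
  assume "a \<in> \<rat>" "b \<in> \<rat>" "a' \<in> \<rat>" "b' \<in> \<rat>"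
    and "x = of_real a + of_real b * sqrt_neg d" "y = of_real a' + of_real b' * sqrt_neg d"
  moreover from this have "x + y = of_real (a + a') + of_real (b + b') * sqrt_neg d"
    by (simp add: algebra_simps)
  ultimately show "\<exists>a\<in>\<rat>. \<exists>b\<in>\<rat>. x + y = of_real a + of_real b * sqrt_neg d"
    using Rats_add by blast
qed

lemma QF_mult: "x \<in> QF d \<Longrightarrow> y \<in> QF d \<Longrightarrow> x * y \<in> QF d"
proof (unfold QF_iff, elim bexE)
  fix a b a' b'
  assume Rats: "a \<in> \<rat>" "b \<in> \<rat>" "a' \<in> \<rat>" "b' \<in> \<rat>"
    and "x = of_real a + of_real b * sqrt_neg d" "y = of_real a' + of_real b' * sqrt_neg d"
  then have
    "x * y = of_real (a * a' - real d * b * b') + of_real (a * b' + b * a') * sqrt_neg d"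
    by (simp add: sqrt_neg_mult_expand)
  moreover have "a * a' - real d * b * b' \<in> \<rat>" "a * b' + b * a' \<in> \<rat>"
    using Rats by (simp_all add: Rats_add Rats_diff Rats_mult)
  ultimately show "\<exists>a\<in>\<rat>. \<exists>b\<in>\<rat>. x * y = of_real a + of_real b * sqrt_neg d"
    by blast
qed

lemma QF_cnj: "x \<in> QF d \<Longrightarrow> cnj x \<in> QF d"
  unfolding QF_iff by (metis Rats_minus_iff cnj_sqrt_neg complex_cnj_add complex_cnj_complex_of_real
      complex_cnj_mult mult_minus_left mult_minus_right of_real_minus)

lemma QF_of_real: "a \<in> \<rat> \<Longrightarrow> complex_of_real a \<in> QF d"
  unfolding QF_iff by (rule bexI[of _ a], rule bexI[of _ 0]) simp_all

lemma QF_of_int [simp]: "of_int n \<in> QF d"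
  using QF_of_real[of "of_int n" d] by simp

lemma QF_1 [simp]: "1 \<in> QF d"
  using QF_of_int[of 1 d] by simp

lemma QF_power: "x \<in> QF d \<Longrightarrow> x ^ k \<in> QF d"
  by (induction k) (auto intro: QF_mult)

lemma QF_divide_of_nat: "x \<in> QF d \<Longrightarrow> x / of_nat n \<in> QF d"
  using QF_mult[OF QF_of_real[of "1 / real n"]] by (simp add: divide_inverse mult.commute)

lemma QF_Reals_imp_Rats:
  assumes "d > 0" "x \<in> QF d" "x \<in> \<real>"
  obtains a where "a \<in> \<rat>" "x = of_real a"
proof -
  obtain a b where ab: "a \<in> \<rat>" "b \<in> \<rat>" "x = of_real a + of_real b * sqrt_neg d"
    using assms(2) by (auto simp: QF_iff)
  have "b * sqrt d = 0"
    using assms(3) ab(3) by (simp add: complex_is_Real_iff sqrt_neg_def)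
  then have "b = 0" using assms(1) by simp
  then show ?thesis using that ab by simp
qed

definition Zsqrt :: "nat \<Rightarrow> complex set" where
  "Zsqrt d = {of_int A + of_int B * sqrt_neg d | A B. True}"

lemma Zsqrt_add:
  assumes "x \<in> Zsqrt d" "y \<in> Zsqrt d"
  shows "x + y \<in> Zsqrt d"
proof -
  obtain A B C D :: int
    where "x = of_int A + of_int B * sqrt_neg d" "y = of_int C + of_int D * sqrt_neg d"
    using assms by (auto simp: Zsqrt_def)
  then have "x + y = of_int (A + C) + of_int (B + D) * sqrt_neg d"
    by (simp add: algebra_simps)
  then show ?thesis unfolding Zsqrt_def by blast
qed

lemma Zsqrt_mult:
  assumes "x \<in> Zsqrt d" "y \<in> Zsqrt d"
  shows "x * y \<in> Zsqrt d"
proof -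
  obtain A B C D :: int
    where "x = of_int A + of_int B * sqrt_neg d" "y = of_int C + of_int D * sqrt_neg d"
    using assms by (auto simp: Zsqrt_def)
  then have "x * y = of_int (A * C - int d * B * D) + of_int (A * D + B * C) * sqrt_neg d"
    by (simp add: sqrt_neg_mult_expand)
  then show ?thesis unfolding Zsqrt_def by blast
qed

lemma Zsqrt_of_int [simp]: "of_int n \<in> Zsqrt d"
  unfolding Zsqrt_def by (rule CollectI, rule exI[of _ n], rule exI[of _ 0]) simp

lemma Zsqrt_0 [simp]: "0 \<in> Zsqrt d"
  using Zsqrt_of_int[of 0 d] by simp

lemma Zsqrt_1 [simp]: "1 \<in> Zsqrt d"
  using Zsqrt_of_int[of 1 d] by simp

lemma Zsqrt_of_nat [simp]: "of_nat n \<in> Zsqrt d"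
  using Zsqrt_of_int[of "int n" d] by simp

lemma Zsqrt_of_int_mult: "x \<in> Zsqrt d \<Longrightarrow> of_int n * x \<in> Zsqrt d"
  by (rule Zsqrt_mult) simp_all

lemma Zsqrt_power: "x \<in> Zsqrt d \<Longrightarrow> x ^ k \<in> Zsqrt d"
  by (induction k) (auto intro: Zsqrt_mult simp: Zsqrt_1)

lemma Zsqrt_sum: "(\<And>i. i \<in> A \<Longrightarrow> f i \<in> Zsqrt d) \<Longrightarrow> sum f A \<in> Zsqrt d"
  by (induction A rule: infinite_finite_induct)
    (auto intro: Zsqrt_add simp: Zsqrt_0)

lemma Zsqrt_subset_QF: "Zsqrt d \<subseteq> QF d"
proof
  fix x assume "x \<in> Zsqrt d"
  then obtain A B :: int where "x = of_real (of_int A) + of_real (of_int B) * sqrt_neg d"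
    unfolding Zsqrt_def by auto
  then show "x \<in> QF d" unfolding QF_iff using Rats_of_int by blast
qed

lemma Zsqrt_norm_Ints:
  assumes "x \<in> Zsqrt d"
  shows "x * cnj x \<in> \<int>"
proof -
  obtain A B :: int where "x = of_int A + of_int B * sqrt_neg d"
    using assms by (auto simp: Zsqrt_def)
  then have "x * cnj x = of_int (A * A + int d * B * B)"
    using sqrt_neg_mult_expand[of "of_int A" "of_int B" d "of_int A" "- of_int B"] by simp
  then show ?thesis by simp
qed

lemma QF_denominator:
  assumes "x \<in> QF d"
  obtains D :: int where "D > 0" "of_int D * x \<in> Zsqrt d"
proof -
  obtain a b where ab: "a \<in> \<rat>" "b \<in> \<rat>" "x = of_real a + of_real b * sqrt_neg d"
    using assms by (auto simp: QF_iff)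
  obtain p q where pq: "q > 0" "a = of_int p / of_int q" using ab(1) by (auto elim: Rats_cases')
  obtain r s where rs: "s > 0" "b = of_int r / of_int s" using ab(2) by (auto elim: Rats_cases')
  have "x = of_int p / of_int q + of_int r / of_int s * sqrt_neg d"
    using ab(3) pq(2) rs(2) by simp
  then have "of_int (q * s) * x = of_int (p * s) + of_int (r * q) * sqrt_neg d"
    using pq(1) rs(1) by (simp add: field_simps)
  then have "of_int (q * s) * x \<in> Zsqrt d" unfolding Zsqrt_def by blast
  moreover have "q * s > 0" using pq(1) rs(1) by simp
  ultimately show ?thesis using that by blast
qed

section \<open>The ring of integers\<close>

text \<open>For elements of K this characterises integrality, and unlike integrality it is visibly
  closed under sums and products.\<close>
definition bounded_denominators :: "nat \<Rightarrow> complex \<Rightarrow> bool" where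
  "bounded_denominators d x \<longleftrightarrow> (\<exists>D::int. D > 0 \<and> (\<forall>k. of_int D * x ^ k \<in> Zsqrt d))"

lemma bounded_denominators_mult:
  assumes "bounded_denominators d x" "bounded_denominators d y"
  shows "bounded_denominators d (x * y)"
proof -
  obtain D E :: int where DE: "D > 0" "E > 0"
    "\<And>k. of_int D * x ^ k \<in> Zsqrt d" "\<And>k. of_int E * y ^ k \<in> Zsqrt d"
    using assms unfolding bounded_denominators_def by blast
  have "of_int (D * E) * (x * y) ^ k = (of_int D * x ^ k) * (of_int E * y ^ k)" for k
    by (simp add: power_mult_distrib algebra_simps)
  then have "of_int (D * E) * (x * y) ^ k \<in> Zsqrt d" for k
    by (metis DE(3,4) Zsqrt_mult)
  with DE show ?thesis unfolding bounded_denominators_def by (meson mult_pos_pos)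
qed

lemma bounded_denominators_add:
  assumes "bounded_denominators d x" "bounded_denominators d y"
  shows "bounded_denominators d (x + y)"
proof -
  obtain D E :: int where DE: "D > 0" "E > 0"
    "\<And>k. of_int D * x ^ k \<in> Zsqrt d" "\<And>k. of_int E * y ^ k \<in> Zsqrt d"
    using assms unfolding bounded_denominators_def by blast
  have "of_int (D * E) * (x + y) ^ k =
      (\<Sum>i\<le>k. of_nat (k choose i) * ((of_int D * x ^ i) * (of_int E * y ^ (k - i))))" for k
    by (simp add: binomial_ring sum_distrib_left algebra_simps)
  then have "of_int (D * E) * (x + y) ^ k \<in> Zsqrt d" for k
    by (simp only:) (intro Zsqrt_sum DE(3,4) Zsqrt_of_nat Zsqrt_mult)
  with DE show ?thesis unfolding bounded_denominators_def by (meson mult_pos_pos)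
qed

lemma bounded_denominators_of_int: "bounded_denominators d (of_int n)"
  unfolding bounded_denominators_def by (rule exI[of _ 1]) (simp flip: of_int_power)

lemma Zsqrt_powers_if_monic_relation:
  assumes rel: "x ^ n = (\<Sum>i<n. of_int (c i) * x ^ i)"
    and low: "\<And>i. i < n \<Longrightarrow> y * x ^ i \<in> Zsqrt d"
  shows "y * x ^ k \<in> Zsqrt d"
proof (induction k rule: less_induct)
  case (less k)
  show ?case
  proof (cases "k < n")
    case True
    then show ?thesis by (rule low)
  next
    case False
    then have "y * x ^ k = y * (x ^ (k - n) * x ^ n)" by (simp flip: power_add)
    also have "\<dots> = (\<Sum>i<n. of_int (c i) * (y * x ^ (k - n + i)))"
      unfolding rel by (simp add: sum_distrib_left power_add mult_ac)
    also have "\<dots> \<in> Zsqrt d"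
      using False by (intro Zsqrt_sum Zsqrt_of_int_mult less.IH) auto
    finally show ?thesis .
  qed
qed

lemma algebraic_int_bounded_denominators:
  assumes x: "x \<in> QF d" "algebraic_int x"
  shows "bounded_denominators d x"
proof -
  obtain p where p: "lead_coeff p = 1" "\<forall>i. coeff p i \<in> \<int>" "poly p x = 0"
    using x(2) by (auto simp: algebraic_int.simps)
  define n where "n = degree p"
  have "\<forall>i. \<exists>m::int. coeff p i = of_int m" using p(2) by (blast elim: Ints_cases)
  then obtain c where c: "\<And>i. coeff p i = of_int (c i)" by metis
  have "0 = (\<Sum>i\<le>n. of_int (c i) * x ^ i)"
    using p(3) by (simp add: poly_altdef c n_def)
  also have "\<dots> = (\<Sum>i<n. of_int (c i) * x ^ i) + x ^ n"
    using p(1) c[of n] by (simp add: n_def lessThan_Suc_atMost[symmetric])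
  finally have rel: "x ^ n = (\<Sum>i<n. of_int (- c i) * x ^ i)"
    by (simp add: sum_negf eq_neg_iff_add_eq_0 add.commute)
  have "\<forall>i. \<exists>D::int. D > 0 \<and> of_int D * x ^ i \<in> Zsqrt d"
    using QF_denominator[OF QF_power[OF x(1)]] by metis
  then obtain Di where Di: "\<And>i. Di i > 0" "\<And>i. of_int (Di i) * x ^ i \<in> Zsqrt d"
    by metis
  define D where "D = (\<Prod>i<n. Di i)"
  have low: "of_int D * x ^ i \<in> Zsqrt d" if "i < n" for i
  proof -
    have "D = (\<Prod>j\<in>{..<n} - {i}. Di j) * Di i"
      unfolding D_def using that by (simp add: prod.remove mult.commute)
    then have "of_int D * x ^ i = of_int (\<Prod>j\<in>{..<n} - {i}. Di j) * (of_int (Di i) * x ^ i)"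
      by (simp only: of_int_mult mult.assoc)
    then show ?thesis
      using Zsqrt_of_int_mult[OF Di(2)[of i]] by (simp only:)
  qed
  have "of_int D * x ^ k \<in> Zsqrt d" for k
    by (rule Zsqrt_powers_if_monic_relation[OF rel low])
  moreover have "D > 0" unfolding D_def using Di(1) by (simp add: prod_pos)
  ultimately show ?thesis unfolding bounded_denominators_def by blast
qed

lemma Rats_Ints_if_bounded_powers:
  fixes a :: real
  assumes "a \<in> \<rat>" "D > 0" "\<And>k. of_int D * a ^ k \<in> \<int>"
  shows "a \<in> \<int>"
proof -
  obtain p q where pq: "q > 0" "coprime p q" "a = of_int p / of_int q"
    using assms(1) by (auto elim: Rats_cases')
  show ?thesis
  proof (rule ccontr)
    assume "a \<notin> \<int>"
    then have q2: "q \<ge> 2" using pq by (cases "q = 1") auto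
    define k where "k = nat D"
    obtain m where "of_int D * a ^ k = of_int m" using assms(3) by (metis Ints_cases)
    then have "real_of_int (D * p ^ k) = of_int (m * q ^ k)"
      using pq by (simp add: power_divide field_simps)
    then have "q ^ k dvd D * p ^ k" by (metis dvd_triv_right of_int_eq_iff)
    moreover have "coprime (q ^ k) (p ^ k)" using pq by (simp add: coprime_commute)
    ultimately have "q ^ k dvd D" using coprime_dvd_mult_left_iff by blast
    then have "q ^ k \<le> D" using assms(2) by (simp add: zdvd_imp_le)
    moreover have "(2::int) ^ k \<le> q ^ k" using q2 by (simp add: power_mono)
    moreover have "int k < 2 ^ k" by (metis of_nat_less_two_power)
    ultimately show False using assms(2) by (simp add: k_def)
  qed
qed

lemma bounded_denominators_norm_Ints:
  assumes "d > 0" "x \<in> QF d" "bounded_denominators d x"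
  shows "x * cnj x \<in> \<int>"
proof -
  obtain a where a: "a \<in> \<rat>" "x * cnj x = of_real a"
    using QF_Reals_imp_Rats[OF assms(1) QF_mult[OF assms(2) QF_cnj[OF assms(2)]]]
    by (metis complex_mult_cnj Reals_of_real)
  obtain D :: int where D: "D > 0" "\<And>k. of_int D * x ^ k \<in> Zsqrt d"
    using assms(3) unfolding bounded_denominators_def by blast
  have Dk: "of_int (D * D) * a ^ k \<in> \<int>" for k
  proof -
    have "(of_int D * x ^ k) * cnj (of_int D * x ^ k) = of_int (D * D) * (x * cnj x) ^ k"
      by (simp add: power_mult_distrib mult_ac)
    also have "\<dots> = of_real (of_int (D * D) * a ^ k)"
      using a(2) by simp
    finally obtain m where "of_real (of_int (D * D) * a ^ k) = complex_of_real (of_int m)"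
      using Zsqrt_norm_Ints[OF D(2)] by (metis Ints_cases of_real_of_int_eq)
    then show ?thesis
      by (simp only: of_real_eq_iff Ints_of_int)
  qed
  have "a \<in> \<int>" using Rats_Ints_if_bounded_powers[OF a(1) _ Dk] D(1) by simp
  then show ?thesis using a(2) by (auto elim: Ints_cases)
qed

text \<open>The trace is read off from the norms of x and x + 1.\<close>
lemma bounded_denominators_trace_Ints:
  assumes "d > 0" "x \<in> QF d" "bounded_denominators d x"
  shows "x + cnj x \<in> \<int>"
proof -
  have "(x + 1) * cnj (x + 1) \<in> \<int>"
    using assms QF_add[OF assms(2), of 1] bounded_denominators_add[OF assms(3) bounded_denominators_of_int[of d 1]]
    by (intro bounded_denominators_norm_Ints) simp_all
  moreover have "x * cnj x \<in> \<int>" using assms by (rule bounded_denominators_norm_Ints)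
  ultimately have "(x + 1) * cnj (x + 1) - x * cnj x - 1 \<in> \<int>" by (intro Ints_diff) auto
  then show ?thesis by (simp add: algebra_simps)
qed

lemma algebraic_int_if_trace_norm_Ints:
  assumes "x + cnj x \<in> \<int>" "x * cnj x \<in> \<int>"
  shows "algebraic_int x"
proof -
  obtain T N where TN: "x + cnj x = of_int T" "x * cnj x = of_int N"
    using assms by (metis Ints_cases)
  define p where "p = [:of_int N, - of_int T, 1 :: complex:]"
  have "poly p x = x * cnj x - (x + cnj x) * x + x * x"
    by (simp add: p_def TN algebra_simps)
  also have "\<dots> = 0" by (simp add: algebra_simps)
  finally have "poly p x = 0" .
  moreover have "lead_coeff p = 1" by (simp add: p_def)
  moreover have "\<forall>i. coeff p i \<in> \<int>"
    by (auto simp: p_def coeff_pCons split: nat.splits)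
  ultimately show ?thesis by (intro algebraic_int.intros)
qed

lemma QF_bounded_denominators_imp_OK:
  assumes "d > 0" "x \<in> QF d" "bounded_denominators d x"
  shows "x \<in> OK d"
  unfolding OK_def using assms
  by (simp add: algebraic_int_if_trace_norm_Ints bounded_denominators_trace_Ints
      bounded_denominators_norm_Ints)

lemma OK_iff_bounded_denominators:
  assumes "d > 0"
  shows "x \<in> OK d \<longleftrightarrow> x \<in> QF d \<and> bounded_denominators d x"
  using QF_bounded_denominators_imp_OK[OF assms] algebraic_int_bounded_denominators[of x d]
  unfolding OK_def by auto

lemma OK_iff_trace_norm:
  assumes "d > 0"
  shows "x \<in> OK d \<longleftrightarrow> x \<in> QF d \<and> x + cnj x \<in> \<int> \<and> x * cnj x \<in> \<int>"
proof
  assume "x \<in> OK d"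
  then show "x \<in> QF d \<and> x + cnj x \<in> \<int> \<and> x * cnj x \<in> \<int>"
    using assms by (simp add: OK_iff_bounded_denominators bounded_denominators_trace_Ints
        bounded_denominators_norm_Ints)
next
  assume "x \<in> QF d \<and> x + cnj x \<in> \<int> \<and> x * cnj x \<in> \<int>"
  then show "x \<in> OK d" by (simp add: OK_def algebraic_int_if_trace_norm_Ints)
qed

lemma OK_imp_QF: "x \<in> OK d \<Longrightarrow> x \<in> QF d"
  by (simp add: OK_def)

lemma OK_add: "d > 0 \<Longrightarrow> x \<in> OK d \<Longrightarrow> y \<in> OK d \<Longrightarrow> x + y \<in> OK d"
  by (auto simp: OK_iff_bounded_denominators intro: QF_add bounded_denominators_add)

lemma OK_mult: "d > 0 \<Longrightarrow> x \<in> OK d \<Longrightarrow> y \<in> OK d \<Longrightarrow> x * y \<in> OK d"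
  by (auto simp: OK_iff_bounded_denominators intro: QF_mult bounded_denominators_mult)

lemma OK_of_int [simp]: "of_int n \<in> OK d"
  by (simp add: OK_def)

lemma OK_of_nat [simp]: "of_nat n \<in> OK d"
  using OK_of_int[of "int n" d] by simp

lemma OK_0 [simp]: "0 \<in> OK d" and OK_1 [simp]: "1 \<in> OK d"
  using OK_of_int[of 0 d] OK_of_int[of 1 d] by simp_all

lemma OK_cnj: "x \<in> OK d \<Longrightarrow> cnj x \<in> OK d"
  by (simp add: OK_def QF_cnj)

lemma OK_cnj_iff [simp]: "cnj x \<in> OK d \<longleftrightarrow> x \<in> OK d"
  using OK_cnj[of x d] OK_cnj[of "cnj x" d] by auto

lemma OK_power: "d > 0 \<Longrightarrow> x \<in> OK d \<Longrightarrow> x ^ k \<in> OK d"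
  by (induction k) (auto intro: OK_mult)

lemma OK_Reals_imp_Ints:
  assumes "d > 0" "x \<in> OK d" "x \<in> \<real>"
  shows "x \<in> \<int>"
proof -
  obtain a where a: "a \<in> \<rat>" "x = of_real a"
    by (rule QF_Reals_imp_Rats[OF assms(1) OK_imp_QF[OF assms(2)] assms(3)])
  then have "algebraic_int a" using assms(2) by (simp add: OK_def)
  then have "a \<in> \<int>" using a(1) by (rule rational_algebraic_int_is_int)
  then show ?thesis using a(2) by (auto elim: Ints_cases)
qed

lemma Zsqrt_imp_OK:
  assumes "d > 0" "x \<in> Zsqrt d"
  shows "x \<in> OK d"
proof (rule QF_bounded_denominators_imp_OK[OF assms(1)])
  show "x \<in> QF d" using assms(2) Zsqrt_subset_QF by blast
  show "bounded_denominators d x"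
    unfolding bounded_denominators_def using assms(2) by (intro exI[of _ 1]) (simp add: Zsqrt_power)
qed

lemma OK_of_int_sqrt_neg: "d > 0 \<Longrightarrow> of_int A + of_int B * sqrt_neg d \<in> OK d"
  by (rule Zsqrt_imp_OK) (auto simp: Zsqrt_def)

lemma QF_nat_denominator:
  assumes "d > 0" "x \<in> QF d"
  obtains m :: nat where "m > 0" "of_nat m * x \<in> OK d"
proof -
  obtain D :: int where "D > 0" "of_int D * x \<in> Zsqrt d"
    by (rule QF_denominator[OF assms(2)])
  then show ?thesis
    using that[of "nat D"] Zsqrt_imp_OK[OF assms(1)] by simp
qed

lemma squarefree_Rats_imp_Ints:
  fixes c :: real
  assumes "squarefree d" "c \<in> \<rat>" "real d * c ^ 2 \<in> \<int>"
  shows "c \<in> \<int>"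
proof -
  obtain p q where pq: "q > 0" "coprime p q" "c = of_int p / of_int q"
    using assms(2) by (auto elim: Rats_cases')
  obtain m where "real d * c ^ 2 = of_int m" using assms(3) by (auto elim: Ints_cases)
  then have "real_of_int (int d * p ^ 2) = of_int (m * q ^ 2)"
    using pq by (simp add: power_divide field_simps)
  then have "q ^ 2 dvd int d * p ^ 2" by (metis dvd_triv_right of_int_eq_iff)
  moreover have "coprime (q ^ 2) (p ^ 2)" using pq by (simp add: coprime_commute)
  ultimately have "q ^ 2 dvd int d" using coprime_dvd_mult_left_iff by blast
  then have "int (nat q ^ 2) dvd int d" using pq(1) by simp
  then have "nat q ^ 2 dvd d" by (simp only: int_dvd_int_iff)
  then have "nat q dvd 1" using assms(1) squarefreeD by blast
  then have "q = 1" using pq(1) by simp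
  then show ?thesis using pq by simp
qed

lemma norm_half_integral:
  "((of_int A + of_int B * sqrt_neg d) / 2) * cnj ((of_int A + of_int B * sqrt_neg d) / 2)
     = of_int (A ^ 2 + int d * B ^ 2) / 4"
  using sqrt_neg_mult_expand[of "of_int A" "of_int B" d "of_int A" "- of_int B"]
  by (simp add: power2_eq_square)

text \<open>Squarefreeness of d bounds the denominator of the sqrt(-d)-coordinate by 2.\<close>
lemma OK_half_integral:
  assumes d: "d > 0" "squarefree d" and x: "x \<in> OK d"
  obtains A B :: int
  where "x = (of_int A + of_int B * sqrt_neg d) / 2" "4 dvd A ^ 2 + int d * B ^ 2"
proof -
  obtain a b where ab: "a \<in> \<rat>" "b \<in> \<rat>" "x = of_real a + of_real b * sqrt_neg d"
    using OK_imp_QF[OF x] by (auto simp: QF_iff)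
  obtain T where T: "x + cnj x = of_int T" "x + cnj x = of_real (2 * a)"
    using x d(1) ab(3) by (auto simp: OK_iff_trace_norm elim: Ints_cases)
  then have A: "2 * a = of_int T" by (metis of_real_eq_iff of_real_of_int_eq)
  obtain N where N: "x * cnj x = of_int N"
    using x d(1) by (auto simp: OK_iff_trace_norm elim: Ints_cases)
  have "x * cnj x = of_real (a ^ 2 + real d * b ^ 2)"
    using sqrt_neg_mult_expand[of "of_real a" "of_real b" d "of_real a" "- of_real b"] ab(3)
    by (simp add: power2_eq_square)
  with N have N': "a ^ 2 + real d * b ^ 2 = of_int N" by (metis of_real_eq_iff of_real_of_int_eq)
  then have "real d * (2 * b) ^ 2 = of_int (4 * N - T ^ 2)"
    using A[symmetric] by (simp add: power2_eq_square algebra_simps)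
  then have "2 * b \<in> \<int>"
    using squarefree_Rats_imp_Ints[OF d(2)] ab(2) by (simp add: Rats_mult)
  then obtain B where B: "2 * b = of_int B" by (elim Ints_cases)
  have "x = (of_real (2 * a) + of_real (2 * b) * sqrt_neg d) / 2"
    using ab(3) by (simp add: field_simps)
  then have "x = (of_int T + of_int B * sqrt_neg d) / 2" using A B by simp
  moreover have "real_of_int (T ^ 2 + int d * B ^ 2) = of_int (4 * N)"
    using A B N' by (simp add: power2_eq_square algebra_simps flip: A B)
  then have "4 dvd T ^ 2 + int d * B ^ 2" by (simp only: of_int_eq_iff) simp
  ultimately show ?thesis by (rule that)
qed

lemma half_integral_OK:
  assumes "d > 0" "4 dvd A ^ 2 + int d * B ^ 2"
  shows "(of_int A + of_int B * sqrt_neg d) / 2 \<in> OK d"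
proof -
  let ?x = "(of_int A + of_int B * sqrt_neg d) / 2"
  have "?x = of_real (of_int A / 2) + of_real (of_int B / 2) * sqrt_neg d"
    by (simp add: add_divide_distrib)
  then have "?x \<in> QF d" unfolding QF_iff by (metis Rats_divide Rats_of_int Rats_number_of)
  moreover have "?x + cnj ?x = of_int A" by (simp add: field_simps)
  moreover obtain N where "A ^ 2 + int d * B ^ 2 = 4 * N" using assms(2) by (elim dvdE)
  then have "?x * cnj ?x = of_int N" by (simp only: norm_half_integral) simp
  ultimately show ?thesis using assms(1) by (simp add: OK_iff_trace_norm)
qed

lemma roots_unity_subset_OK: "roots_unity d \<subseteq> OK d"
proof
  fix z assume "z \<in> roots_unity d"
  then obtain k where z: "z \<in> QF d" "k > 0" "z ^ k = 1" by (auto simp: roots_unity_def)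
  have "algebraic_int z"
    by (rule algebraic_int_root[where p = "monom 1 k" and y = 1])
      (use z in \<open>auto simp: poly_monom coeff_monom degree_monom_eq\<close>)
  then show "z \<in> OK d" using z(1) by (simp add: OK_def)
qed

text \<open>O has only finitely many elements of norm 1, so the powers of such an element repeat.\<close>
lemma OK_norm_1_imp_root_of_unity:
  assumes d: "d > 0" "squarefree d" and z: "z \<in> OK d" "z * cnj z = 1"
  obtains k where "k > 0" "z ^ k = 1"
proof -
  define S where "S = {w \<in> OK d. w * cnj w = 1}"
  define f where "f = (\<lambda>(A::int, B::int). (of_int A + of_int B * sqrt_neg d) / (2::complex))"
  have "S \<subseteq> f ` ({-2..2} \<times> {-2..2})"
  proof
    fix w assume "w \<in> S"
    then have w: "w \<in> OK d" "w * cnj w = 1" by (auto simp: S_def)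
    obtain A B where AB: "w = (of_int A + of_int B * sqrt_neg d) / 2"
      using OK_half_integral[OF d w(1)] by blast
    have "complex_of_int (A ^ 2 + int d * B ^ 2) = of_int 4"
      using w(2) unfolding AB norm_half_integral by simp
    then have e: "A ^ 2 + int d * B ^ 2 = 4" by (simp only: of_int_eq_iff)
    moreover have "B ^ 2 \<le> int d * B ^ 2" using d(1) by (simp add: mult_le_cancel_right1)
    moreover have "0 \<le> A ^ 2" "0 \<le> B ^ 2" by simp_all
    ultimately have "A ^ 2 \<le> 4" "B ^ 2 \<le> 4" by linarith+
    then have "\<bar>A\<bar> \<le> 2" "\<bar>B\<bar> \<le> 2"
      using abs_le_square_iff[of A 2] abs_le_square_iff[of B 2] by simp_all
    then show "w \<in> f ` ({-2..2} \<times> {-2..2})" using AB unfolding f_def by force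
  qed
  then have "finite S" by (rule finite_subset) simp
  moreover have "range (\<lambda>k::nat. z ^ k) \<subseteq> S"
    using OK_power[OF d(1) z(1)] z(2) by (auto simp: S_def simp flip: power_mult_distrib)
  ultimately have "\<not> inj (\<lambda>k::nat. z ^ k)"
    using finite_imageD finite_subset infinite_UNIV_nat by blast
  then obtain i j :: nat where "i < j" "z ^ i = z ^ j"
    unfolding inj_def by (metis linorder_neqE_nat)
  moreover have "z \<noteq> 0" using z(2) by auto
  ultimately have "z ^ (j - i) = 1"
    by (metis (no_types) le_add_diff_inverse less_imp_le_nat mult_cancel_left1 power_add power_eq_0_iff)
  with \<open>i < j\<close> show ?thesis using that[of "j - i"] by simp
qed

lemma K1_minus_roots_unity_not_OK:
  assumes "d > 0" "squarefree d" "z \<in> K1 d - roots_unity d"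
  shows "z \<notin> OK d"
proof
  assume "z \<in> OK d"
  moreover have "z \<in> QF d" "z * cnj z = 1" using assms(3) by (auto simp: K1_def)
  ultimately obtain k where "k > 0" "z ^ k = 1"
    using OK_norm_1_imp_root_of_unity[OF assms(1,2)] by blast
  then have "z \<in> roots_unity d" using \<open>z \<in> QF d\<close> by (auto simp: roots_unity_def)
  with assms(3) show False by simp
qed

lemma not_OK_imp_K1_minus_roots_unity:
  assumes "z \<in> QF d" "z * cnj z = 1" "z \<notin> OK d"
  shows "z \<in> K1 d - roots_unity d"
  using assms roots_unity_subset_OK by (auto simp: K1_def)

section \<open>Ideals of O\<close>

lemma is_idealD:
  assumes "is_ideal d I"
  shows "I \<subseteq> OK d" "0 \<in> I" "\<And>x y. x \<in> I \<Longrightarrow> y \<in> I \<Longrightarrow> x + y \<in> I"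
    "\<And>a x. a \<in> OK d \<Longrightarrow> x \<in> I \<Longrightarrow> a * x \<in> I"
  using assms unfolding is_ideal_def by blast+

lemma is_idealI:
  assumes "I \<subseteq> OK d" "0 \<in> I" "\<And>x y. x \<in> I \<Longrightarrow> y \<in> I \<Longrightarrow> x + y \<in> I"
    "\<And>a x. a \<in> OK d \<Longrightarrow> x \<in> I \<Longrightarrow> a * x \<in> I"
  shows "is_ideal d I"
  using assms unfolding is_ideal_def by blast

lemma is_ideal_OK: "d > 0 \<Longrightarrow> is_ideal d (OK d)"
  by (rule is_idealI) (auto intro: OK_add OK_mult)

lemma ideal_of_int_mult: "is_ideal d I \<Longrightarrow> x \<in> I \<Longrightarrow> of_int n * x \<in> I"
  using is_idealD(4)[OF _ OK_of_int] by blast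

lemma ideal_diff:
  assumes "is_ideal d I" "x \<in> I" "y \<in> I"
  shows "x - y \<in> I"
  using is_idealD(3)[OF assms(1,2) ideal_of_int_mult[OF assms(1,3), of "-1"]] by simp

lemma ideal_eq_OK_if_1:
  assumes "is_ideal d I" "1 \<in> I"
  shows "I = OK d"
  using is_idealD(1,4)[OF assms(1)] assms(2) by (metis mult.right_neutral subsetI subset_antisym)

lemma ideal_gen_superset: "S \<subseteq> ideal_gen d S"
  unfolding ideal_gen_def by blast

lemma ideal_gen_least: "is_ideal d I \<Longrightarrow> S \<subseteq> I \<Longrightarrow> ideal_gen d S \<subseteq> I"
  unfolding ideal_gen_def by blast

lemma is_ideal_ideal_gen:
  assumes "d > 0" "S \<subseteq> OK d"
  shows "is_ideal d (ideal_gen d S)"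
proof (rule is_idealI)
  show "ideal_gen d S \<subseteq> OK d" using assms by (intro ideal_gen_least is_ideal_OK)
qed (auto simp: ideal_gen_def intro: is_idealD(2-4))

lemma is_ideal_mult_preimage:
  assumes "d > 0" "is_ideal d I"
  shows "is_ideal d {t \<in> OK d. c * t \<in> I}"
  using is_idealD(2-4)[OF assms(2)]
  by (intro is_idealI) (auto intro: OK_add[OF assms(1)] OK_mult[OF assms(1)]
      simp: distrib_left mult.left_commute)

lemma is_ideal_sum:
  assumes "d > 0" "is_ideal d I" "is_ideal d J"
  shows "is_ideal d {x + y | x y. x \<in> I \<and> y \<in> J}"
proof (rule is_idealI)
  show "{x + y | x y. x \<in> I \<and> y \<in> J} \<subseteq> OK d"
    using is_idealD(1)[OF assms(2)] is_idealD(1)[OF assms(3)] by (auto intro: OK_add[OF assms(1)])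
  show "0 \<in> {x + y | x y. x \<in> I \<and> y \<in> J}"
    using is_idealD(2)[OF assms(2)] is_idealD(2)[OF assms(3)] by force
next
  fix u v assume "u \<in> {x + y | x y. x \<in> I \<and> y \<in> J}" "v \<in> {x + y | x y. x \<in> I \<and> y \<in> J}"
  then obtain x y x' y' where "u = x + y" "v = x' + y'" "x \<in> I" "y \<in> J" "x' \<in> I" "y' \<in> J"
    by blast
  moreover have "u + v = (x + x') + (y + y')" using calculation by simp
  ultimately show "u + v \<in> {x + y | x y. x \<in> I \<and> y \<in> J}"
    using is_idealD(3)[OF assms(2)] is_idealD(3)[OF assms(3)] by blast
next
  fix a u assume "a \<in> OK d" "u \<in> {x + y | x y. x \<in> I \<and> y \<in> J}"
  then obtain x y where "a \<in> OK d" "u = x + y" "x \<in> I" "y \<in> J" by blast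
  moreover have "a * u = a * x + a * y" using calculation by (simp add: distrib_left)
  ultimately show "a * u \<in> {x + y | x y. x \<in> I \<and> y \<in> J}"
    using is_idealD(4)[OF assms(2)] is_idealD(4)[OF assms(3)] by blast
qed

lemma coprime_ideals_sum_1:
  assumes "d > 0" "is_ideal d I" "is_ideal d J" "ideal_gen d (I \<union> J) = OK d"
  obtains x y where "1 = x + y" "x \<in> I" "y \<in> J"
proof -
  have "ideal_gen d (I \<union> J) \<subseteq> {x + y | x y. x \<in> I \<and> y \<in> J}"
    using is_idealD(2)[OF assms(2)] is_idealD(2)[OF assms(3)]
    by (intro ideal_gen_least is_ideal_sum assms(1-3)) force
  then have "1 \<in> {x + y | x y. x \<in> I \<and> y \<in> J}" using assms(4) OK_1[of d] by blast
  with that show ?thesis by blast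
qed

definition principal_ideal :: "nat \<Rightarrow> complex \<Rightarrow> complex set" where
  "principal_ideal d c = {c * x | x. x \<in> OK d}"

lemma principal_iff_principal_ideal: "principal d I \<longleftrightarrow> (\<exists>c\<in>OK d. I = principal_ideal d c)"
  by (simp add: principal_def principal_ideal_def)

lemma principal_idealI: "x \<in> OK d \<Longrightarrow> c * x \<in> principal_ideal d c"
  unfolding principal_ideal_def by blast

lemma principal_ideal_self: "c \<in> principal_ideal d c"
  using principal_idealI[OF OK_1, where c = c] by simp

lemma is_ideal_principal_ideal:
  assumes "d > 0" "c \<in> OK d"
  shows "is_ideal d (principal_ideal d c)"
proof (rule is_idealI)
  show "principal_ideal d c \<subseteq> OK d" unfolding principal_ideal_def using assms by (auto intro: OK_mult)
  show "0 \<in> principal_ideal d c" using principal_idealI[OF OK_0, where c = c] by simp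
next
  fix x y assume "x \<in> principal_ideal d c" "y \<in> principal_ideal d c"
  then obtain u v where uv: "x = c * u" "y = c * v" "u \<in> OK d" "v \<in> OK d"
    unfolding principal_ideal_def by blast
  then have "c * (u + v) \<in> principal_ideal d c" by (intro principal_idealI OK_add assms(1))
  then show "x + y \<in> principal_ideal d c" using uv by (simp add: distrib_left)
next
  fix a x assume "a \<in> OK d" "x \<in> principal_ideal d c"
  then obtain u where u: "x = c * u" "u \<in> OK d" "a \<in> OK d" unfolding principal_ideal_def by blast
  then have "c * (a * u) \<in> principal_ideal d c" by (intro principal_idealI OK_mult assms(1))
  then show "a * x \<in> principal_ideal d c" using u by (simp add: mult.left_commute)
qed

lemma principal_ideal_mult:
  assumes "d > 0" "u \<in> principal_ideal d a" "v \<in> principal_ideal d b"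
  shows "u * v \<in> principal_ideal d (a * b)"
proof -
  obtain s t where st: "u = a * s" "v = b * t" "s \<in> OK d" "t \<in> OK d"
    using assms(2,3) unfolding principal_ideal_def by blast
  then have "(a * b) * (s * t) \<in> principal_ideal d (a * b)" by (intro principal_idealI OK_mult assms(1))
  then show ?thesis using st by (simp add: mult_ac)
qed

lemma cnj_principal_ideal: "u \<in> principal_ideal d c \<Longrightarrow> cnj u \<in> principal_ideal d (cnj c)"
  unfolding principal_ideal_def by force

lemma principal_ideal_subset: "is_ideal d I \<Longrightarrow> c \<in> I \<Longrightarrow> principal_ideal d c \<subseteq> I"
  unfolding principal_ideal_def by (auto simp: mult.commute intro: is_idealD(4))

lemma is_ideal_ideal_mult:
  assumes "d > 0" "I \<subseteq> OK d" "J \<subseteq> OK d"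
  shows "is_ideal d (ideal_mult d I J)"
  unfolding ideal_mult_def
proof (rule is_ideal_ideal_gen[OF assms(1)])
  show "{x * y | x y. x \<in> I \<and> y \<in> J} \<subseteq> OK d"
  proof
    fix u assume "u \<in> {x * y | x y. x \<in> I \<and> y \<in> J}"
    then obtain x y where "u = x * y" "x \<in> OK d" "y \<in> OK d" using assms(2,3) by blast
    then show "u \<in> OK d" using OK_mult[OF assms(1)] by simp
  qed
qed

lemma ideal_mult_memI: "x \<in> I \<Longrightarrow> y \<in> J \<Longrightarrow> x * y \<in> ideal_mult d I J"
  unfolding ideal_mult_def by (rule subsetD[OF ideal_gen_superset]) blast

lemma ideal_mult_least:
  "is_ideal d K \<Longrightarrow> (\<And>x y. x \<in> I \<Longrightarrow> y \<in> J \<Longrightarrow> x * y \<in> K) \<Longrightarrow> ideal_mult d I J \<subseteq> K"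
  unfolding ideal_mult_def by (rule ideal_gen_least) auto

lemma ideal_mult_subset_left:
  assumes "is_ideal d I" "J \<subseteq> OK d"
  shows "ideal_mult d I J \<subseteq> I"
proof (rule ideal_mult_least[OF assms(1)])
  fix x y assume "x \<in> I" "y \<in> J"
  then have "y * x \<in> I" using assms by (intro is_idealD(4)) auto
  then show "x * y \<in> I" by (simp add: mult.commute)
qed

lemma ideal_mult_gen_preimage:
  assumes d: "d > 0" and K: "is_ideal d K" and OK: "S \<subseteq> OK d" "J \<subseteq> OK d"
    and gen: "\<And>s v. s \<in> S \<Longrightarrow> v \<in> J \<Longrightarrow> c * (s * v) \<in> K"
  shows "ideal_mult d (ideal_gen d S) J \<subseteq> {t \<in> OK d. c * t \<in> K}"
proof (rule ideal_mult_least[OF is_ideal_mult_preimage[OF d K]])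
  fix u v assume u: "u \<in> ideal_gen d S" and v: "v \<in> J"
  have "ideal_gen d S \<subseteq> {t \<in> OK d. (c * v) * t \<in> K}"
    using gen[OF _ v] OK(1) by (intro ideal_gen_least is_ideal_mult_preimage d K) (auto simp: mult_ac)
  then have "u \<in> OK d" "c * (u * v) \<in> K" using u by (auto simp: mult_ac)
  moreover have "v \<in> OK d" using v OK(2) by blast
  ultimately show "u * v \<in> {t \<in> OK d. c * t \<in> K}" using OK_mult[OF d] by blast
qed

lemma ideal_mult_mult_mem:
  assumes d: "d > 0" and K: "is_ideal d K"
    and OK: "I \<subseteq> OK d" "J \<subseteq> OK d" "I' \<subseteq> OK d" "J' \<subseteq> OK d"
    and gen: "\<And>x y x' y'. x \<in> I \<Longrightarrow> y \<in> J \<Longrightarrow> x' \<in> I' \<Longrightarrow> y' \<in> J' \<Longrightarrow> (x * y) * (x' * y') \<in> K"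
    and uv: "u \<in> ideal_mult d I J" "v \<in> ideal_mult d I' J'"
  shows "u * v \<in> K"
proof -
  have "ideal_mult d I' J' \<subseteq> {t \<in> OK d. (x * y) * t \<in> K}" if "x \<in> I" "y \<in> J" for x y
  proof (rule ideal_mult_least[OF is_ideal_mult_preimage[OF d K]])
    fix x' y' assume "x' \<in> I'" "y' \<in> J'"
    then show "x' * y' \<in> {t \<in> OK d. (x * y) * t \<in> K}"
      using gen[OF that] OK(3,4) by (auto intro: OK_mult[OF d])
  qed
  then have "ideal_mult d I J \<subseteq> {t \<in> OK d. v * t \<in> K}"
    using uv(2) OK(1,2)
    by (intro ideal_mult_least[OF is_ideal_mult_preimage[OF d K]]) (auto intro: OK_mult[OF d] simp: mult.commute)
  then show ?thesis using uv(1) by (auto simp: mult.commute)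
qed

lemma conj_ideal_iff [simp]: "x \<in> conj_ideal I \<longleftrightarrow> cnj x \<in> I"
  unfolding conj_ideal_def by force

lemma conj_ideal_conj_ideal [simp]: "conj_ideal (conj_ideal I) = I"
  by auto

lemma conj_ideal_mono: "I \<subseteq> J \<Longrightarrow> conj_ideal I \<subseteq> conj_ideal J"
  unfolding conj_ideal_def by (rule image_mono)

lemma conj_ideal_subset_OK: "I \<subseteq> OK d \<Longrightarrow> conj_ideal I \<subseteq> OK d"
  by (auto dest: subsetD[of I _ "cnj _"])

lemma is_ideal_conj_ideal:
  assumes "is_ideal d I"
  shows "is_ideal d (conj_ideal I)"
  using is_idealD[OF assms] by (intro is_idealI) (auto simp: conj_ideal_subset_OK)

lemma conj_ideal_mult_subset:
  assumes "d > 0" "I \<subseteq> OK d" "J \<subseteq> OK d"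
  shows "conj_ideal (ideal_mult d I J) \<subseteq> ideal_mult d (conj_ideal I) (conj_ideal J)"
proof
  fix x assume "x \<in> conj_ideal (ideal_mult d I J)"
  then have "cnj x \<in> ideal_mult d I J" by (simp only: conj_ideal_iff)
  moreover have "ideal_mult d I J \<subseteq> conj_ideal (ideal_mult d (conj_ideal I) (conj_ideal J))"
  proof (rule ideal_mult_least)
    show "is_ideal d (conj_ideal (ideal_mult d (conj_ideal I) (conj_ideal J)))"
      using assms by (intro is_ideal_conj_ideal is_ideal_ideal_mult conj_ideal_subset_OK)
    fix u v assume "u \<in> I" "v \<in> J"
    then have "cnj u * cnj v \<in> ideal_mult d (conj_ideal I) (conj_ideal J)"
      by (intro ideal_mult_memI) (simp_all only: conj_ideal_iff complex_cnj_cnj)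
    then show "u * v \<in> conj_ideal (ideal_mult d (conj_ideal I) (conj_ideal J))"
      by (simp only: conj_ideal_iff complex_cnj_mult)
  qed
  ultimately have "cnj x \<in> conj_ideal (ideal_mult d (conj_ideal I) (conj_ideal J))" by blast
  then show "x \<in> ideal_mult d (conj_ideal I) (conj_ideal J)"
    by (simp only: conj_ideal_iff complex_cnj_cnj)
qed

lemma conj_ideal_mult:
  assumes "d > 0" "I \<subseteq> OK d" "J \<subseteq> OK d"
  shows "conj_ideal (ideal_mult d I J) = ideal_mult d (conj_ideal I) (conj_ideal J)"
proof (rule antisym)
  show "conj_ideal (ideal_mult d I J) \<subseteq> ideal_mult d (conj_ideal I) (conj_ideal J)"
    using assms by (rule conj_ideal_mult_subset)
  have "conj_ideal (ideal_mult d (conj_ideal I) (conj_ideal J)) \<subseteq> ideal_mult d I J"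
    using conj_ideal_mult_subset[OF assms(1) conj_ideal_subset_OK[OF assms(2)]
        conj_ideal_subset_OK[OF assms(3)]]
    by (simp only: conj_ideal_conj_ideal)
  then show "ideal_mult d (conj_ideal I) (conj_ideal J) \<subseteq> conj_ideal (ideal_mult d I J)"
    using conj_ideal_mono by (metis conj_ideal_conj_ideal)
qed

lemma ideal_nat_dvd_if_least:
  assumes J: "is_ideal d J" and n: "n > 0" "of_nat n \<in> J"
    and least: "\<And>k. 0 < k \<Longrightarrow> k < n \<Longrightarrow> of_nat k \<notin> J"
    and m: "of_int m \<in> J"
  shows "int n dvd m"
proof -
  define r where "r = m mod int n"
  have r: "0 \<le> r" "r < int n" using n(1) by (simp_all add: r_def)
  have "of_int r = of_int m - of_int (m div int n) * (of_nat n :: complex)"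
    by (simp add: r_def minus_div_mult_eq_mod [symmetric])
  also have "\<dots> \<in> J" using ideal_diff[OF J m ideal_of_int_mult[OF J n(2)]] .
  finally have "of_nat (nat r) \<in> J" using r by simp
  then have "r = 0" using least[of "nat r"] r by linarith
  then show ?thesis by (simp add: r_def dvd_eq_mod_eq_0)
qed

lemma ideal_Reals_nat_multiples:
  assumes d: "d > 0" and J: "is_ideal d J" and k: "k > 0" "of_nat k \<in> J"
  obtains n :: nat where "n > 0" "of_nat n \<in> J"
    "\<And>w. w \<in> J \<Longrightarrow> w \<in> \<real> \<Longrightarrow> w / of_nat n \<in> \<int>"
proof -
  define n where "n = (LEAST k. k > 0 \<and> of_nat k \<in> J)"
  have n: "n > 0" "of_nat n \<in> J"
    using LeastI[of "\<lambda>k. k > 0 \<and> of_nat k \<in> J", OF conjI[OF k]] unfolding n_def by blast+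
  have least: "of_nat k' \<notin> J" if "0 < k'" "k' < n" for k'
    using not_less_Least[of k' "\<lambda>k. k > 0 \<and> of_nat k \<in> J"] that unfolding n_def by blast
  have "w / of_nat n \<in> \<int>" if w: "w \<in> J" "w \<in> \<real>" for w
  proof -
    obtain m where m: "w = of_int m"
      using OK_Reals_imp_Ints[OF d _ w(2)] is_idealD(1)[OF J] w(1) by (blast elim: Ints_cases)
    have "int n dvd m" using ideal_nat_dvd_if_least[OF J n least] w(1) m by simp
    then obtain q where "m = int n * q" by (elim dvdE)
    then show ?thesis using m n(1) by simp
  qed
  with that n show ?thesis by blast
qed

lemma OK_norm_pos_nat:
  assumes "d > 0" "x \<in> OK d" "x \<noteq> 0"
  obtains k :: nat where "k > 0" "x * cnj x = of_nat k"
proof -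
  have "x * cnj x \<in> \<int>" using assms(1,2) by (simp add: OK_iff_trace_norm)
  then obtain k where k: "x * cnj x = of_int k" by (elim Ints_cases)
  have "real_of_int k = (Re x)\<^sup>2 + (Im x)\<^sup>2"
    using arg_cong[OF k[symmetric], of Re] by (simp add: complex_mult_cnj)
  then have "k > 0" using assms(3) complex_neq_0 by (metis of_int_0_less_iff)
  then show ?thesis using that[of "nat k"] k by simp
qed

lemma quotient_OK_if_trace_norms_divisible:
  assumes d: "d > 0" and xy: "x \<in> OK d" "y \<in> OK d"
    and "(x * cnj y + y * cnj x) / of_nat n \<in> \<int>"
    and "x * cnj x / of_nat n \<in> \<int>" "y * cnj y / of_nat n \<in> \<int>"
  shows "x * cnj y / of_nat n \<in> OK d"
proof -
  let ?w = "x * cnj y / of_nat n"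
  have "?w \<in> QF d" using xy by (intro QF_divide_of_nat QF_mult QF_cnj OK_imp_QF)
  moreover have "?w + cnj ?w = (x * cnj y + y * cnj x) / of_nat n"
    by (simp add: add_divide_distrib mult.commute)
  then have "?w + cnj ?w \<in> \<int>" using assms(4) by (simp only:)
  moreover have "?w * cnj ?w = (x * cnj x / of_nat n) * (y * cnj y / of_nat n)"
    by (simp add: algebra_simps)
  then have "?w * cnj ?w \<in> \<int>" using Ints_mult[OF assms(5,6)] by (simp only:)
  ultimately show ?thesis unfolding OK_iff_trace_norm[OF d] by blast
qed

text \<open>The second and third property say that L conj(L) is the principal ideal (n).\<close>
lemma ideal_mult_conj_ideal_nat_generator:
  assumes d: "d > 0" and L: "is_ideal d L" "L \<noteq> {0}"
  obtains n :: nat where "n > 0" "of_nat n \<in> ideal_mult d L (conj_ideal L)"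
    "\<And>x y. x \<in> L \<Longrightarrow> y \<in> L \<Longrightarrow> x * cnj y / of_nat n \<in> OK d"
proof -
  define J where "J = ideal_mult d L (conj_ideal L)"
  have LOK: "L \<subseteq> OK d" using is_idealD(1)[OF L(1)] .
  have J: "is_ideal d J"
    unfolding J_def using d LOK by (intro is_ideal_ideal_mult conj_ideal_subset_OK)
  have prod: "x * cnj y \<in> J" if "x \<in> L" "y \<in> L" for x y
    unfolding J_def using that by (intro ideal_mult_memI) simp_all
  obtain x0 where x0: "x0 \<in> L" "x0 \<noteq> 0" using L(2) is_idealD(2)[OF L(1)] by blast
  obtain k where k: "k > 0" "x0 * cnj x0 = of_nat k"
    using OK_norm_pos_nat[OF d _ x0(2)] x0(1) LOK by blast
  then have "of_nat k \<in> J" using prod[OF x0(1) x0(1)] by simp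
  then obtain n where n: "n > 0" "of_nat n \<in> J"
    and J_Reals: "\<And>w. w \<in> J \<Longrightarrow> w \<in> \<real> \<Longrightarrow> w / of_nat n \<in> \<int>"
    using ideal_Reals_nat_multiples[OF d J k(1)] by blast
  have "x * cnj y / of_nat n \<in> OK d" if xy: "x \<in> L" "y \<in> L" for x y
  proof (rule quotient_OK_if_trace_norms_divisible[OF d])
    show "x \<in> OK d" "y \<in> OK d" using xy LOK by blast+
    show "(x * cnj y + y * cnj x) / of_nat n \<in> \<int>"
      using prod[OF xy] prod[OF xy(2,1)] is_idealD(3)[OF J]
      by (intro J_Reals) (simp_all add: complex_is_Real_iff algebra_simps)
    show "x * cnj x / of_nat n \<in> \<int>" "y * cnj y / of_nat n \<in> \<int>"
      by (rule J_Reals[OF prod[OF xy(1) xy(1)]], simp add: complex_mult_cnj,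
          rule J_Reals[OF prod[OF xy(2) xy(2)]], simp add: complex_mult_cnj)
  qed
  with that n show ?thesis unfolding J_def by blast
qed

section \<open>The ideals pi_z\<close>

lemma pi_z_memI: "a \<in> OK d \<Longrightarrow> a * z \<in> OK d \<Longrightarrow> a \<in> pi_z d z"
  by (simp add: pi_z_def)

lemma is_ideal_pi_z: "d > 0 \<Longrightarrow> is_ideal d (pi_z d z)"
  unfolding pi_z_def
  by (intro is_idealI) (auto intro: OK_add OK_mult simp: distrib_right mult.assoc)

lemma conj_pi_z:
  assumes "z * cnj z = 1"
  shows "conj_ideal (pi_z d z) = (\<lambda>a. z * a) ` pi_z d z"
proof (intro equalityI subsetI)
  fix v assume "v \<in> conj_ideal (pi_z d z)"
  then have "cnj v \<in> OK d" "cnj v * z \<in> OK d" by (simp_all add: pi_z_def)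
  then have "v \<in> OK d" "v * cnj z \<in> OK d"
    using OK_cnj_iff[of v d] OK_cnj_iff[of "v * cnj z" d] by simp_all
  moreover have e: "v * cnj z * z = v" "v = z * (v * cnj z)"
    using assms by (metis mult.assoc mult.commute mult.right_neutral)+
  ultimately have "v * cnj z \<in> pi_z d z" unfolding pi_z_def mem_Collect_eq e(1) by blast
  then show "v \<in> (\<lambda>a. z * a) ` pi_z d z" using e(2) by (rule rev_image_eqI)
next
  fix v assume "v \<in> (\<lambda>a. z * a) ` pi_z d z"
  then obtain a where a: "v = z * a" "a \<in> OK d" "a * z \<in> OK d" by (auto simp: pi_z_def)
  have "cnj v * z = cnj a * (z * cnj z)" using a(1) by (simp add: mult_ac)
  then have "cnj v * z = cnj a" using assms by simp
  moreover have "v = a * z" using a(1) by (simp only: mult.commute)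
  ultimately have "cnj v \<in> OK d" "cnj v * z \<in> OK d"
    using OK_cnj[OF a(3)] OK_cnj[OF a(2)] by (simp_all only:)
  then show "v \<in> conj_ideal (pi_z d z)" unfolding conj_ideal_iff pi_z_def by blast
qed

lemma pi_z_nonzero_proper:
  assumes d: "d > 0" "squarefree d" and z: "z \<in> K1 d - roots_unity d"
  shows "pi_z d z \<noteq> {0}" "pi_z d z \<noteq> OK d"
proof -
  have "z \<in> QF d" using z by (simp add: K1_def)
  then obtain m :: nat where m: "m > 0" "of_nat m * z \<in> OK d"
    by (rule QF_nat_denominator[OF d(1)])
  then have "of_nat m \<in> pi_z d z" by (simp add: pi_z_def)
  moreover have "(of_nat m :: complex) \<noteq> 0" using m(1) by simp
  ultimately show "pi_z d z \<noteq> {0}" by (metis singletonD)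
  show "pi_z d z \<noteq> OK d"
  proof
    assume "pi_z d z = OK d"
    then have "1 * z \<in> OK d" using OK_1 unfolding pi_z_def by blast
    then show False using K1_minus_roots_unity_not_OK[OF d z] by simp
  qed
qed

lemma quotient_mem_pi_z:
  assumes "of_nat m \<in> L" "of_nat m * z \<in> L" "cnj v \<in> L"
    and div: "\<And>x y. x \<in> L \<Longrightarrow> y \<in> L \<Longrightarrow> x * cnj y / of_nat n \<in> OK d"
  shows "of_nat m * v / of_nat n \<in> pi_z d z"
proof -
  have "of_nat m * cnj (cnj v) / of_nat n \<in> OK d" "of_nat m * z * cnj (cnj v) / of_nat n \<in> OK d"
    using div assms(1-3) by blast+
  then show ?thesis unfolding pi_z_def by (simp add: mult_ac)
qed

text \<open>With m z in O, the ideal L = (m, m z) satisfies L conj(L) = (n); every element of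
  L conj(L) / n lies in pi_z + conj(pi_z), in particular 1 = n / n.\<close>
lemma pi_z_coprime_conj:
  assumes d: "d > 0" and z: "z \<in> QF d" "z * cnj z = 1"
  shows "ideal_gen d (pi_z d z \<union> conj_ideal (pi_z d z)) = OK d"
proof -
  define I where "I = pi_z d z"
  define G where "G = ideal_gen d (I \<union> conj_ideal I)"
  have I: "is_ideal d I" unfolding I_def using d by (rule is_ideal_pi_z)
  have G: "is_ideal d G" unfolding G_def
    using d is_idealD(1)[OF I] is_idealD(1)[OF is_ideal_conj_ideal[OF I]]
    by (intro is_ideal_ideal_gen) auto
  have IG: "I \<subseteq> G" "conj_ideal I \<subseteq> G" using ideal_gen_superset unfolding G_def by blast+
  have zI: "z * a \<in> conj_ideal I" if "a \<in> I" for a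
    using that conj_pi_z[OF z(2), of d] unfolding I_def by blast
  obtain m :: nat where m: "m > 0" "of_nat m * z \<in> OK d" by (rule QF_nat_denominator[OF d z(1)])
  define L where "L = ideal_gen d {of_nat m, of_nat m * z}"
  have L: "is_ideal d L" unfolding L_def using d m(2) by (intro is_ideal_ideal_gen) auto
  have mL: "of_nat m \<in> L" "of_nat m * z \<in> L" unfolding L_def using ideal_gen_superset by blast+
  have "L \<noteq> {0}" using mL m(1) by auto
  then obtain n :: nat where n: "n > 0" "of_nat n \<in> ideal_mult d L (conj_ideal L)"
    and div: "\<And>x y. x \<in> L \<Longrightarrow> y \<in> L \<Longrightarrow> x * cnj y / of_nat n \<in> OK d"
    using ideal_mult_conj_ideal_nat_generator[OF d L] by blast
  have "ideal_mult d (ideal_gen d {of_nat m, of_nat m * z}) (conj_ideal L)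
      \<subseteq> {t \<in> OK d. inverse (of_nat n) * t \<in> G}"
  proof (rule ideal_mult_gen_preimage[OF d G])
    show "{of_nat m, of_nat m * z} \<subseteq> OK d" "conj_ideal L \<subseteq> OK d"
      using m(2) conj_ideal_subset_OK[OF is_idealD(1)[OF L]] by auto
    fix s v assume s: "s \<in> {of_nat m, of_nat m * z}" and v: "v \<in> conj_ideal L"
    define w where "w = of_nat m * v / of_nat n"
    have "w \<in> I" unfolding I_def w_def using mL v div by (intro quotient_mem_pi_z) simp_all
    then have "w \<in> G" "z * w \<in> G" using IG zI by blast+
    moreover have "inverse (of_nat n) * (of_nat m * v) = w"
      "inverse (of_nat n) * (of_nat m * z * v) = z * w"
      unfolding w_def by (simp_all add: field_simps)
    ultimately have "inverse (of_nat n) * (of_nat m * v) \<in> G"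
      "inverse (of_nat n) * (of_nat m * z * v) \<in> G" by (simp_all only:)
    then show "inverse (of_nat n) * (s * v) \<in> G" using s by blast
  qed
  then have "inverse (of_nat n) * of_nat n \<in> G" using n(2) unfolding L_def[symmetric] by blast
  then have "1 \<in> G" using n(1) by simp
  then show ?thesis using ideal_eq_OK_if_1[OF G] unfolding G_def I_def by blast
qed

lemma pi_z_mult_conj_subset:
  assumes d: "d > 0" and z: "z * cnj z = 1"
  shows "ideal_mult d (pi_z d z) (conj_ideal (pi_z d z))
    \<subseteq> {t \<in> OK d. cnj z * t \<in> ideal_mult d (pi_z d z) (pi_z d z)}"
proof -
  have IOK: "pi_z d z \<subseteq> OK d" by (rule is_idealD(1)[OF is_ideal_pi_z[OF d]])
  have M: "is_ideal d (ideal_mult d (pi_z d z) (pi_z d z))" by (rule is_ideal_ideal_mult[OF d IOK IOK])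
  show ?thesis
  proof (rule ideal_mult_least[OF is_ideal_mult_preimage[OF d M]])
    fix x v assume x: "x \<in> pi_z d z" and v: "v \<in> conj_ideal (pi_z d z)"
    then obtain a where a: "a \<in> pi_z d z" "v = z * a" using conj_pi_z[OF z] by blast
    have "x * v \<in> OK d" using x v IOK conj_ideal_subset_OK[OF IOK] OK_mult[OF d] by blast
    have "cnj z * (x * v) = x * a * (z * cnj z)" by (simp add: a(2) mult_ac)
    then have "cnj z * (x * v) = x * a" using z by simp
    moreover have "x * a \<in> ideal_mult d (pi_z d z) (pi_z d z)" using x a(1) by (rule ideal_mult_memI)
    ultimately have "cnj z * (x * v) \<in> ideal_mult d (pi_z d z) (pi_z d z)" by (simp only:)
    with \<open>x * v \<in> OK d\<close>
    show "x * v \<in> {t \<in> OK d. cnj z * t \<in> ideal_mult d (pi_z d z) (pi_z d z)}" by blast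
  qed
qed

text \<open>Since conj(pi_z) = z pi_z, the square of pi_z is conj(z) pi_z conj(pi_z) = (conj(z) n).\<close>
lemma pi_z_square_principal:
  assumes d: "d > 0" and z: "z * cnj z = 1" and nz: "pi_z d z \<noteq> {0}"
  shows "principal d (ideal_mult d (pi_z d z) (pi_z d z))"
proof -
  define I where "I = pi_z d z"
  define M where "M = ideal_mult d I I"
  have I: "is_ideal d I" unfolding I_def using d by (rule is_ideal_pi_z)
  have IOK: "I \<subseteq> OK d" by (rule is_idealD(1)[OF I])
  have M: "is_ideal d M" unfolding M_def by (rule is_ideal_ideal_mult[OF d IOK IOK])
  have cI: "conj_ideal I = (\<lambda>a. z * a) ` I" unfolding I_def by (rule conj_pi_z[OF z])
  obtain n :: nat where n: "n > 0" "of_nat n \<in> ideal_mult d I (conj_ideal I)"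
    and div: "\<And>x y. x \<in> I \<Longrightarrow> y \<in> I \<Longrightarrow> x * cnj y / of_nat n \<in> OK d"
    using ideal_mult_conj_ideal_nat_generator[OF d I nz[folded I_def]] by blast
  define c where "c = cnj z * of_nat n"
  have "c \<in> M"
    using pi_z_mult_conj_subset[OF d z] n(2) unfolding c_def M_def I_def by blast
  then have "principal_ideal d c \<subseteq> M" using M by (intro principal_ideal_subset)
  moreover have "M \<subseteq> principal_ideal d c"
    unfolding M_def
  proof (rule ideal_mult_least[OF is_ideal_principal_ideal[OF d]])
    show "c \<in> OK d" using \<open>c \<in> M\<close> is_idealD(1)[OF M] by blast
    fix x y assume x: "x \<in> I" and y: "y \<in> I"
    have "z * y \<in> conj_ideal I" using cI y by blast
    then have "cnj (z * y) \<in> I" by (simp only: conj_ideal_iff)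
    with x have "x * cnj (cnj (z * y)) / of_nat n \<in> OK d" by (rule div)
    then have "c * (x * y * z / of_nat n) \<in> principal_ideal d c" by (intro principal_idealI) (simp add: mult_ac)
    moreover have "c * (x * y * z / of_nat n) = x * y"
      unfolding c_def using n(1) z by (simp add: field_simps)
    ultimately show "x * y \<in> principal_ideal d c" by simp
  qed
  ultimately have "M = principal_ideal d c" by blast
  then show ?thesis
    using \<open>c \<in> M\<close> is_idealD(1)[OF M] unfolding principal_iff_principal_ideal M_def I_def by blast
qed

lemma pi_z_in_JJ:
  assumes "d > 0" "squarefree d" "z \<in> K1 d - roots_unity d"
  shows "pi_z d z \<in> JJ d"
  using assms pi_z_nonzero_proper[OF assms] is_ideal_pi_z[OF assms(1)]
    pi_z_coprime_conj[OF assms(1)] pi_z_square_principal[OF assms(1)]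
  unfolding JJ_def K1_def by auto

text \<open>The unit relating the two generators is a positive rational integer, hence 1.\<close>
lemma norm_eq_of_nat_if_associated:
  assumes d: "d > 0" and N: "N > 0"
    and dvd: "\<alpha> * cnj \<alpha> \<in> principal_ideal d (of_nat N)" "of_nat N \<in> principal_ideal d (\<alpha> * cnj \<alpha>)"
  shows "\<alpha> * cnj \<alpha> = of_nat N"
proof -
  obtain u v where uv: "\<alpha> * cnj \<alpha> = of_nat N * u" "of_nat N = \<alpha> * cnj \<alpha> * v"
    "u \<in> OK d" "v \<in> OK d"
    using dvd unfolding principal_ideal_def by blast
  have N0: "(of_nat N :: complex) \<noteq> 0" using N by simp
  have "u * v = 1" using uv(1,2) N0 by (metis mult.assoc mult_cancel_left1)
  have "u = (\<alpha> * cnj \<alpha>) / of_nat N" using uv(1) N0 by simp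
  then have "u \<in> \<real>" by (simp add: complex_mult_cnj)
  then obtain k where k: "u = of_int k" using OK_Reals_imp_Ints[OF d uv(3)] by (auto elim: Ints_cases)
  have "u \<noteq> 0" using \<open>u * v = 1\<close> by auto
  then have "v = 1 / u" using \<open>u * v = 1\<close> by (simp add: eq_divide_eq mult.commute)
  then have "v \<in> \<real>" using \<open>u \<in> \<real>\<close> by simp
  then obtain l where l: "v = of_int l" using OK_Reals_imp_Ints[OF d uv(4)] by (auto elim: Ints_cases)
  have "k * l = 1" using \<open>u * v = 1\<close> k l by (metis of_int_1 of_int_eq_iff of_int_mult)
  moreover have "k \<ge> 0"
  proof -
    have "0 \<le> Re (\<alpha> * cnj \<alpha>)" by (simp add: complex_mult_cnj)
    then show ?thesis using uv(1) k N by (simp add: zero_le_mult_iff)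
  qed
  ultimately have "k = 1" using zmult_eq_1_iff by force
  then show ?thesis using uv(1) k by simp
qed

text \<open>Both (alpha conj(alpha)) and (n^2) equal P P conj(P) conj(P).\<close>
lemma generator_norm_eq_nat_square:
  assumes d: "d > 0" and P: "is_ideal d P"
    and \<alpha>: "\<alpha> \<in> OK d" "ideal_mult d P P = principal_ideal d \<alpha>"
    and n: "n > 0" "of_nat n \<in> ideal_mult d P (conj_ideal P)"
    and div: "\<And>x y. x \<in> P \<Longrightarrow> y \<in> P \<Longrightarrow> x * cnj y / of_nat n \<in> OK d"
  shows "\<alpha> * cnj \<alpha> = of_nat (n * n)"
proof (rule norm_eq_of_nat_if_associated[OF d])
  have POK: "P \<subseteq> OK d" "conj_ideal P \<subseteq> OK d"
    using is_idealD(1)[OF P] conj_ideal_subset_OK by blast+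
  have multiple: "x * y \<in> principal_ideal d (of_nat n)" if "x \<in> P" "cnj y \<in> P" for x y
    using principal_idealI[OF div[OF that], where c = "of_nat n"] n(1) by simp
  have "\<alpha> \<in> ideal_mult d P P" using principal_ideal_self[of \<alpha> d] \<alpha>(2) by simp
  moreover have "cnj \<alpha> \<in> ideal_mult d (conj_ideal P) (conj_ideal P)"
    using \<open>\<alpha> \<in> ideal_mult d P P\<close>
    unfolding conj_ideal_mult[OF d POK(1) POK(1), symmetric] by simp
  ultimately show "\<alpha> * cnj \<alpha> \<in> principal_ideal d (of_nat (n * n))"
  proof (rule ideal_mult_mult_mem[OF d is_ideal_principal_ideal[OF d OK_of_nat] POK(1) POK(1) POK(2) POK(2) _ _ _, rotated 1])
    fix x y x' y' assume "x \<in> P" "y \<in> P" "x' \<in> conj_ideal P" "y' \<in> conj_ideal P"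
    then have "(x * x') * (y * y') \<in> principal_ideal d (of_nat n * of_nat n)"
      by (intro principal_ideal_mult[OF d] multiple) auto
    then show "x * y * (x' * y') \<in> principal_ideal d (of_nat (n * n))" by (simp add: mult_ac)
  qed
  have "(of_nat n :: complex) * of_nat n \<in> principal_ideal d (\<alpha> * cnj \<alpha>)"
  proof (rule ideal_mult_mult_mem[OF d is_ideal_principal_ideal[OF d] POK(1) POK(2) POK(1) POK(2) _ n(2) n(2)])
    show "\<alpha> * cnj \<alpha> \<in> OK d" using \<alpha>(1) by (intro OK_mult d) simp_all
    fix x y x' y' assume "x \<in> P" "y \<in> conj_ideal P" "x' \<in> P" "y' \<in> conj_ideal P"
    then have "x * x' \<in> principal_ideal d \<alpha>" "cnj y * cnj y' \<in> principal_ideal d \<alpha>"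
      unfolding \<alpha>(2)[symmetric] by (auto intro: ideal_mult_memI)
    then have "(x * x') * cnj (cnj y * cnj y') \<in> principal_ideal d (\<alpha> * cnj \<alpha>)"
      by (intro principal_ideal_mult[OF d] cnj_principal_ideal)
    then show "x * y * (x' * y') \<in> principal_ideal d (\<alpha> * cnj \<alpha>)" by (simp add: mult_ac)
  qed
  then show "of_nat (n * n) \<in> principal_ideal d (\<alpha> * cnj \<alpha>)" by simp
qed (use n in simp)

text \<open>Coprimality gives 1 = p + q with p in P and q in conj(P); then q^2 lies in
  conj(alpha) O, which moves a q^2 into P whenever a conj(alpha) / n is integral.\<close>
lemma pi_z_cnj_generator_eq:
  assumes d: "d > 0" and P: "is_ideal d P"
    and cop: "ideal_gen d (P \<union> conj_ideal P) = OK d"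
    and \<alpha>: "ideal_mult d P P = principal_ideal d \<alpha>"
    and n: "n > 0" "of_nat n \<in> ideal_mult d P (conj_ideal P)"
    and div: "\<And>x y. x \<in> P \<Longrightarrow> y \<in> P \<Longrightarrow> x * cnj y / of_nat n \<in> OK d"
  shows "pi_z d (cnj \<alpha> / of_nat n) = P"
proof -
  have POK: "P \<subseteq> OK d" using is_idealD(1)[OF P] .
  show ?thesis
  proof (intro equalityI subsetI)
    have "\<alpha> \<in> P" using principal_ideal_self \<alpha> ideal_mult_subset_left[OF P POK] by blast
    fix a assume a: "a \<in> P"
    then show "a \<in> pi_z d (cnj \<alpha> / of_nat n)"
      using div[OF a \<open>\<alpha> \<in> P\<close>] POK by (auto simp: pi_z_def)
  next
    fix a assume "a \<in> pi_z d (cnj \<alpha> / of_nat n)"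
    then have a: "a \<in> OK d" "a * cnj \<alpha> / of_nat n \<in> OK d" by (auto simp: pi_z_def)
    obtain p q where pq: "1 = p + q" "p \<in> P" "q \<in> conj_ideal P"
      using coprime_ideals_sum_1[OF d P is_ideal_conj_ideal[OF P] cop] by blast
    have "cnj q * cnj q \<in> principal_ideal d \<alpha>"
      unfolding \<alpha>[symmetric] using pq(3) by (intro ideal_mult_memI) simp_all
    then obtain c' where c': "cnj q * cnj q = \<alpha> * c'" "c' \<in> OK d" unfolding principal_ideal_def by blast
    define c where "c = cnj c'"
    have c: "q * q = cnj \<alpha> * c" "c \<in> OK d"
      using arg_cong[OF c'(1), of cnj] OK_cnj[OF c'(2)] unfolding c_def by simp_all
    have "of_nat n \<in> P" using n(2) ideal_mult_subset_left[OF P] conj_ideal_subset_OK[OF POK] by blast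
    then have "(a * cnj \<alpha> / of_nat n * c) * of_nat n \<in> P"
      using a(2) c(2) by (intro is_idealD(4)[OF P] OK_mult d)
    then have "a * q * q \<in> P" using c(1) n(1) by (simp add: mult_ac)
    moreover have "a * q * p \<in> P" "a * p \<in> P"
      using a(1) pq conj_ideal_subset_OK[OF POK] by (auto intro!: is_idealD(4)[OF P] OK_mult d)
    moreover have "a = a * p + (a * q * p + a * q * q)"
      using pq(1) by algebra
    ultimately show "a \<in> P" using is_idealD(3)[OF P] by metis
  qed
qed

lemma JJ_imp_eq_pi_z:
  assumes d: "d > 0" "squarefree d" and P: "P \<in> JJ d"
  obtains z where "z \<in> K1 d - roots_unity d" "pi_z d z = P"
proof -
  have I: "is_ideal d P" and nz: "P \<noteq> {0}" and np: "P \<noteq> OK d"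
    and cop: "ideal_gen d (P \<union> conj_ideal P) = OK d" and pr: "principal d (ideal_mult d P P)"
    using P by (auto simp: JJ_def)
  obtain \<alpha> where \<alpha>: "\<alpha> \<in> OK d" "ideal_mult d P P = principal_ideal d \<alpha>"
    using pr by (auto simp: principal_iff_principal_ideal)
  obtain n :: nat where n: "n > 0" "of_nat n \<in> ideal_mult d P (conj_ideal P)"
    and div: "\<And>x y. x \<in> P \<Longrightarrow> y \<in> P \<Longrightarrow> x * cnj y / of_nat n \<in> OK d"
    using ideal_mult_conj_ideal_nat_generator[OF d(1) I nz] by blast
  define z where "z = cnj \<alpha> / of_nat n"
  have piP: "pi_z d z = P" unfolding z_def using d(1) I cop \<alpha>(2) n div by (rule pi_z_cnj_generator_eq)
  have "z \<in> QF d" unfolding z_def using \<alpha>(1) by (intro QF_divide_of_nat QF_cnj OK_imp_QF)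
  moreover have "z * cnj z = 1"
    using generator_norm_eq_nat_square[OF d(1) I \<alpha> n div] n(1) unfolding z_def by (simp add: field_simps)
  moreover have "z \<notin> OK d"
  proof
    assume "z \<in> OK d"
    then have "1 \<in> P" using piP by (auto simp: pi_z_def)
    with np show False using ideal_eq_OK_if_1[OF I] by blast
  qed
  ultimately show ?thesis using that not_OK_imp_K1_minus_roots_unity piP by blast
qed

lemma F_eq_Inf_ideal_norm:
  assumes "d > 0" "squarefree d"
  shows "F d = Inf (ideal_norm d ` JJ d)"
proof -
  have "pi_z d ` (K1 d - roots_unity d) = JJ d"
    using pi_z_in_JJ[OF assms] JJ_imp_eq_pi_z[OF assms] by blast
  moreover have "dz d ` (K1 d - roots_unity d) = ideal_norm d ` pi_z d ` (K1 d - roots_unity d)"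
    unfolding dz_def by (simp add: image_image)
  ultimately show ?thesis unfolding F_def by simp
qed

section \<open>Norms of ideals and the values F(1) and F(3)\<close>

definition coset :: "complex set \<Rightarrow> complex \<Rightarrow> complex set" where
  "coset I x = (\<lambda>y. x + y) ` I"

lemma ideal_norm_eq_card_cosets: "ideal_norm d I = card (coset I ` OK d)"
  unfolding ideal_norm_def coset_def by simp

lemma coset_eq_iff:
  assumes I: "is_ideal d I"
  shows "coset I x = coset I y \<longleftrightarrow> x - y \<in> I"
proof
  assume "coset I x = coset I y"
  moreover have "x + 0 \<in> coset I x" unfolding coset_def using is_idealD(2)[OF I] by blast
  ultimately obtain t where "t \<in> I" "x = y + t" unfolding coset_def by auto
  then show "x - y \<in> I" by simp
next
  have sub: "coset I u \<subseteq> coset I v" if "u - v \<in> I" for u v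
  proof
    fix w assume "w \<in> coset I u"
    then obtain t where "t \<in> I" "w = u + t" unfolding coset_def by blast
    moreover have "w = v + ((u - v) + t)" using calculation by simp
    ultimately show "w \<in> coset I v"
      using is_idealD(3)[OF I that] unfolding coset_def by blast
  qed
  assume "x - y \<in> I"
  moreover have "y - x \<in> I" using ideal_diff[OF I is_idealD(2)[OF I] \<open>x - y \<in> I\<close>] by simp
  ultimately show "coset I x = coset I y" using sub by blast
qed

lemma finite_cosets:
  assumes d: "d > 0" "squarefree d" and I: "is_ideal d I" and m: "m > 0" "of_nat m \<in> I"
  shows "finite (coset I ` OK d)"
proof -
  define M where "M = 2 * int m"
  define g where "g = (\<lambda>(A::int, B::int). coset I ((of_int A + of_int B * sqrt_neg d) / 2))"
  have "coset I ` OK d \<subseteq> g ` ({0..<M} \<times> {0..<M})"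
  proof
    fix C assume "C \<in> coset I ` OK d"
    then obtain x where x: "x \<in> OK d" "C = coset I x" by blast
    obtain A B where AB: "x = (of_int A + of_int B * sqrt_neg d) / 2"
      using OK_half_integral[OF d x(1)] by blast
    have M: "M > 0" using m(1) by (simp add: M_def)
    have A: "A = 2 * int m * (A div M) + A mod M" and B: "B = 2 * int m * (B div M) + B mod M"
      unfolding M_def by simp_all
    have "of_int A = 2 * of_nat m * of_int (A div M) + (of_int (A mod M) :: complex)"
      "of_int B = 2 * of_nat m * of_int (B div M) + (of_int (B mod M) :: complex)"
      using arg_cong[where f = "of_int :: int \<Rightarrow> complex", OF A]
        arg_cong[where f = "of_int :: int \<Rightarrow> complex", OF B] by simp_all
    moreover define y where "y = of_int (A div M) + of_int (B div M) * sqrt_neg d"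
    ultimately have "x - (of_int (A mod M) + of_int (B mod M) * sqrt_neg d) / 2 = y * of_nat m"
      unfolding AB y_def by (simp add: field_simps)
    moreover have "y \<in> OK d" unfolding y_def by (rule OK_of_int_sqrt_neg[OF d(1)])
    ultimately have "x - (of_int (A mod M) + of_int (B mod M) * sqrt_neg d) / 2 \<in> I"
      using is_idealD(4)[OF I _ m(2)] by simp
    then have "C = g (A mod M, B mod M)" unfolding g_def x(2) by (simp add: coset_eq_iff[OF I])
    moreover have "(A mod M, B mod M) \<in> {0..<M} \<times> {0..<M}" using M by simp
    ultimately show "C \<in> g ` ({0..<M} \<times> {0..<M})" by blast
  qed
  then show ?thesis by (rule finite_subset) simp
qed

lemma ideal_contains_nat_le_norm:
  assumes I: "is_ideal d I" and fin: "finite (coset I ` OK d)"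
  obtains j where "1 \<le> j" "j \<le> ideal_norm d I" "of_nat j \<in> I"
proof -
  define k where "k = ideal_norm d I"
  define f where "f = (\<lambda>j::nat. coset I (of_nat j))"
  have "f ` {0..k} \<subseteq> coset I ` OK d"
    unfolding f_def by (rule image_subsetI) (rule imageI[OF OK_of_nat])
  then have "card (f ` {0..k}) \<le> k"
    using card_mono[OF fin] unfolding k_def ideal_norm_eq_card_cosets by blast
  then have "card (f ` {0..k}) < card {0..k}" by simp
  then have "\<not> inj_on f {0..k}" using pigeonhole by blast
  then obtain a b where "a \<in> {0..k}" "b \<in> {0..k}" "a \<noteq> b" "f a = f b"
    unfolding inj_on_def by blast
  then obtain a b where ab: "a \<le> k" "b \<le> k" "a < b" "f a = f b"
    by (metis atLeastAtMost_iff linorder_neqE_nat)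
  have "of_nat b - of_nat a \<in> I" using ab(4)[symmetric] unfolding f_def coset_eq_iff[OF I] .
  then have "of_nat (b - a) \<in> I" using ab(3) by (simp add: of_nat_diff)
  moreover have "1 \<le> b - a" "b - a \<le> k" using ab by auto
  ultimately show ?thesis using that unfolding k_def by blast
qed

lemma dz_nat_multiple:
  assumes d: "d > 0" "squarefree d" and z: "z \<in> QF d"
  obtains j where "1 \<le> j" "j \<le> dz d z" "of_nat j * z \<in> OK d"
proof -
  have I: "is_ideal d (pi_z d z)" by (rule is_ideal_pi_z[OF d(1)])
  obtain m :: nat where m: "m > 0" "of_nat m * z \<in> OK d" by (rule QF_nat_denominator[OF d(1) z])
  then have "of_nat m \<in> pi_z d z" by (simp add: pi_z_def)
  then have "finite (coset (pi_z d z) ` OK d)" using finite_cosets[OF d I m(1)] by blast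
  then obtain j where "1 \<le> j" "j \<le> dz d z" "of_nat j \<in> pi_z d z"
    unfolding dz_def by (rule ideal_contains_nat_le_norm[OF I])
  then show ?thesis using that by (simp add: pi_z_def)
qed

text \<open>If d(z) \<le> K, then j z is integral for some j \<le> K, and writing 2 j z = A + B sqrt(-d)
  gives A^2 + d B^2 = 4 j^2; divisibility of A and B by j would make z integral.\<close>
lemma dz_gt_if_solutions_divisible:
  assumes d: "d > 0" "squarefree d" and z: "z \<in> K1 d - roots_unity d"
    and dvd: "\<And>j A B. 1 \<le> j \<Longrightarrow> j \<le> K \<Longrightarrow> A ^ 2 + int d * B ^ 2 = 4 * (int j) ^ 2
      \<Longrightarrow> int j dvd A \<and> int j dvd B"
  shows "K < dz d z"
proof (rule ccontr)
  assume "\<not> K < dz d z"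
  have zq: "z \<in> QF d" and zn: "z * cnj z = 1" using z by (auto simp: K1_def)
  obtain j where j: "1 \<le> j" "j \<le> dz d z" "of_nat j * z \<in> OK d"
    by (rule dz_nat_multiple[OF d zq])
  obtain A B where AB: "of_nat j * z = (of_int A + of_int B * sqrt_neg d) / 2"
    using OK_half_integral[OF d j(3)] by blast
  have "(of_nat j * z) * cnj (of_nat j * z) = of_int (A ^ 2 + int d * B ^ 2) / 4"
    unfolding AB by (rule norm_half_integral)
  then have "of_int (A ^ 2 + int d * B ^ 2) / 4 = (of_nat j * z) * cnj (of_nat j * z)" ..
  also have "\<dots> = of_nat j * of_nat j * (z * cnj z)" by (simp add: mult_ac)
  also have "\<dots> = of_int (int j ^ 2)" using zn by (simp add: power2_eq_square)
  finally have "of_int (A ^ 2 + int d * B ^ 2) / 4 = (of_int (int j ^ 2) :: complex)" .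
  then have "of_int (A ^ 2 + int d * B ^ 2) = (of_int (4 * int j ^ 2) :: complex)"
    by (simp add: field_simps)
  then have eq: "A ^ 2 + int d * B ^ 2 = 4 * (int j) ^ 2" by (simp only: of_int_eq_iff)
  have "j \<le> K" using j(2) \<open>\<not> K < dz d z\<close> by simp
  then obtain A' B' where A': "A = int j * A'" and B': "B = int j * B'"
    using dvd[OF j(1) _ eq] by (meson dvdE)
  have "(int j) ^ 2 * (A' ^ 2 + int d * B' ^ 2) = (int j) ^ 2 * 4"
    using eq unfolding A' B'
    by (simp add: power_mult_distrib algebra_simps)
  then have four: "4 dvd A' ^ 2 + int d * B' ^ 2" using j(1) by simp
  have "of_nat j * z = of_nat j * ((of_int A' + of_int B' * sqrt_neg d) / 2)"
    using AB unfolding A' B' by (simp add: field_simps)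
  then have "z = (of_int A' + of_int B' * sqrt_neg d) / 2" using j(1) by simp
  then have "z \<in> OK d" using half_integral_OK[OF d(1) four] by (simp only:)
  with K1_minus_roots_unity_not_OK[OF d z] show False by simp
qed

lemma divisible_solutions_from_table:
  fixes A B :: int and j d N M :: nat
  assumes eq: "A ^ 2 + int d * B ^ 2 = 4 * (int j) ^ 2"
    and table: "\<forall>a\<in>{..<N}. \<forall>b\<in>{..<M}. a * a + d * b * b = 4 * j * j \<longrightarrow> j dvd a \<and> j dvd b"
    and bounds: "4 * j * j < N * N" "4 * j * j < d * M * M"
  shows "int j dvd A \<and> int j dvd B"
proof -
  define a b where "a = nat \<bar>A\<bar>" and "b = nat \<bar>B\<bar>"
  have "int (a * a + d * b * b) = A ^ 2 + int d * B ^ 2"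
    by (simp add: a_def b_def power2_eq_square abs_mult_self_eq)
  also have "\<dots> = int (4 * j * j)" unfolding eq by (simp add: power2_eq_square)
  finally have e: "a * a + d * b * b = 4 * j * j" by (simp only: of_nat_eq_iff)
  then have "a * a < N * N" "d * b * b < d * M * M" using bounds by linarith+
  then have "a * a < N * N" "b * b < M * M" by (simp_all add: mult.assoc)
  then have "a < N" "b < M" by (meson mult_le_mono not_le le_less_trans)+
  then have "j dvd a" "j dvd b" using table e by auto
  then show ?thesis unfolding a_def b_def by (simp flip: int_dvd_int_iff)
qed

text \<open>Modulo I every a + b omega is congruent to a + b r, hence to one of 0, ..., m - 1.\<close>
lemma ideal_norm_le_if_residue:
  assumes I: "is_ideal d I" and m: "m > 0" "of_nat m \<in> I" and r: "\<omega> - of_int r \<in> I"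
    and basis: "\<And>x. x \<in> OK d \<Longrightarrow> \<exists>a b::int. x = of_int a + of_int b * \<omega>"
  shows "ideal_norm d I \<le> m"
proof -
  have "coset I ` OK d \<subseteq> (\<lambda>j. coset I (of_nat j)) ` {..<m}"
  proof
    fix C assume "C \<in> coset I ` OK d"
    then obtain x a b where x: "C = coset I x" "x = of_int a + of_int b * \<omega>"
      using basis by blast
    define q t where "q = (a + b * r) div int m" and "t = (a + b * r) mod int m"
    have t: "0 \<le> t" "t < int m" using m(1) by (simp_all add: t_def)
    have "a + b * r = int m * q + t" by (simp add: q_def t_def)
    from arg_cong[where f = "of_int :: int \<Rightarrow> complex", OF this]
    have "of_int a = of_nat m * of_int q + of_int t - of_int b * (of_int r :: complex)"
      by (simp add: algebra_simps)
    then have "x - of_nat (nat t) = of_int b * (\<omega> - of_int r) + of_int q * of_nat m"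
      using t(1) unfolding x(2) by (simp add: algebra_simps)
    also have "\<dots> \<in> I"
      using is_idealD(3)[OF I ideal_of_int_mult[OF I r] ideal_of_int_mult[OF I m(2)]] .
    finally have "C = coset I (of_nat (nat t))"
      unfolding x(1) by (simp add: coset_eq_iff[OF I])
    moreover have "nat t < m" using t by (simp add: nat_less_iff)
    ultimately show "C \<in> (\<lambda>j. coset I (of_nat j)) ` {..<m}" by blast
  qed
  then have "card (coset I ` OK d) \<le> card ((\<lambda>j. coset I (of_nat j)) ` {..<m})"
    by (rule card_mono[rotated]) simp
  also have "\<dots> \<le> m" using card_image_le[of "{..<m}"] by simp
  finally show ?thesis unfolding ideal_norm_eq_card_cosets .
qed

lemma F_eq_if_attained:
  assumes "z0 \<in> K1 d - roots_unity d" "dz d z0 \<le> V"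
    and "\<And>z. z \<in> K1 d - roots_unity d \<Longrightarrow> V \<le> dz d z"
  shows "F d = V"
  unfolding F_def using assms by (intro cInf_eq_minimum) (auto intro: antisym)

lemma int_square_mod_4: "(A::int)\<^sup>2 mod 4 = (if even A then 0 else 1)"
proof (cases "even A")
  case True
  then obtain k where "A = 2 * k" by (elim evenE)
  then show ?thesis by (simp add: power2_eq_square)
next
  case False
  then obtain k where "A = 2 * k + 1" by (elim oddE)
  then have "A\<^sup>2 = 4 * (k * k + k) + 1" by (simp add: power2_eq_square algebra_simps)
  moreover have "(4 * w + 1) mod 4 = (1::int)" for w by presburger
  ultimately have "A\<^sup>2 mod 4 = 1" by (simp only:)
  then show ?thesis using False by simp
qed

lemma even_if_4_dvd_sum_squares:
  assumes "4 dvd (A::int)\<^sup>2 + B\<^sup>2"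
  shows "even A \<and> even B"
proof -
  have "(A\<^sup>2 mod 4 + B\<^sup>2 mod 4) mod 4 = 0" using assms by (simp add: mod_add_eq)
  then show ?thesis unfolding int_square_mod_4 by (auto split: if_splits)
qed

lemma even_diff_if_4_dvd:
  assumes "4 dvd (A::int)\<^sup>2 + 3 * B\<^sup>2"
  shows "even (A - B)"
proof -
  have "(A\<^sup>2 mod 4 + 3 * (B\<^sup>2 mod 4)) mod 4 = (A\<^sup>2 + 3 * (B\<^sup>2 mod 4) mod 4) mod 4"
    by (simp add: mod_add_left_eq mod_add_right_eq)
  also have "\<dots> = (A\<^sup>2 + 3 * B\<^sup>2) mod 4" by (simp add: mod_add_right_eq mod_mult_right_eq)
  also have "\<dots> = 0" using assms by simp
  finally have "(A\<^sup>2 mod 4 + 3 * (B\<^sup>2 mod 4)) mod 4 = 0" .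
  then show ?thesis unfolding int_square_mod_4 by (auto split: if_splits)
qed

lemma trace_not_Int_imp_not_OK:
  assumes "d > 0" "q \<noteq> 0" "\<not> q dvd p" "z + cnj z = of_int p / of_int q"
  shows "z \<notin> OK d"
proof
  assume "z \<in> OK d"
  then have "z + cnj z \<in> \<int>" using assms(1) by (simp add: OK_iff_trace_norm)
  then obtain k where "of_int p / of_int q = (of_int k :: complex)"
    using assms(4) by (auto elim: Ints_cases)
  then have "of_int p = (of_int (q * k) :: complex)" using assms(2) by (simp add: field_simps)
  then have "p = q * k" by (simp only: of_int_eq_iff)
  with assms(3) show False by simp
qed

lemma squarefree_3: "squarefree (3::nat)"
  by (rule squarefree_prime) simp

lemma OK_1_Gaussian_integer:
  assumes "x \<in> OK 1"
  shows "\<exists>a b::int. x = of_int a + of_int b * sqrt_neg 1"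
proof -
  obtain A B where AB: "x = (of_int A + of_int B * sqrt_neg 1) / 2" "4 dvd A\<^sup>2 + int 1 * B\<^sup>2"
    by (rule OK_half_integral[OF zero_less_one squarefree_1 assms])
  then have "even A" "even B" using even_if_4_dvd_sum_squares by simp_all
  then obtain a b where "A = 2 * a" "B = 2 * b" by (elim evenE)
  then have "x = of_int a + of_int b * sqrt_neg 1" unfolding AB(1) by simp
  then show ?thesis by blast
qed

lemma OK_3_Eisenstein_integer:
  assumes "x \<in> OK 3"
  shows "\<exists>a b::int. x = of_int a + of_int b * ((1 + sqrt_neg 3) / 2)"
proof -
  obtain A B where AB: "x = (of_int A + of_int B * sqrt_neg 3) / 2" "4 dvd A\<^sup>2 + int 3 * B\<^sup>2"
    by (rule OK_half_integral[OF zero_less_numeral squarefree_3 assms])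
  then have "even (A - B)" using even_diff_if_4_dvd by simp
  then obtain a where "A - B = 2 * a" by (elim evenE)
  then have "A = 2 * a + B" by simp
  then have "x = of_int a + of_int B * ((1 + sqrt_neg 3) / 2)" unfolding AB(1) by (simp add: field_simps)
  then show ?thesis by blast
qed

lemma K1_1_witness: "(3 + 4 * sqrt_neg 1) / 5 \<in> K1 1 - roots_unity 1"
proof (rule not_OK_imp_K1_minus_roots_unity)
  show "(3 + 4 * sqrt_neg 1) / 5 \<in> QF 1" unfolding QF_iff
    by (rule bexI[of _ "3/5"], rule bexI[of _ "4/5"]) (simp_all add: field_simps)
  show "(3 + 4 * sqrt_neg 1) / 5 * cnj ((3 + 4 * sqrt_neg 1) / 5) = 1"
    by (simp add: field_simps sqrt_neg_mult_self sqrt_neg_mult_self_left)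
  show "(3 + 4 * sqrt_neg 1) / 5 \<notin> OK 1"
    by (rule trace_not_Int_imp_not_OK[where p = 6 and q = 5]) (simp_all add: field_simps)
qed

text \<open>The witness is (2 + i) / (2 - i), so pi_z = (2 - i), modulo which i = 2.\<close>
lemma dz_1_witness: "dz 1 ((3 + 4 * sqrt_neg 1) / 5) \<le> 5"
  unfolding dz_def
proof (rule ideal_norm_le_if_residue[OF is_ideal_pi_z _ _ _ OK_1_Gaussian_integer, where r = 2])
  let ?s = "sqrt_neg 1" and ?z = "(3 + 4 * sqrt_neg 1) / 5"
  have "of_nat 5 * ?z = of_int 3 + of_int 4 * ?s" by simp
  then have "of_nat 5 * ?z \<in> OK 1" by (simp only: OK_of_int_sqrt_neg[OF zero_less_one])
  then show "of_nat 5 \<in> pi_z 1 ?z" by (rule pi_z_memI[OF OK_of_nat])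
  have "?s - of_int 2 = of_int (-2) + of_int 1 * ?s" by simp
  then have "?s - of_int 2 \<in> OK 1" by (simp only: OK_of_int_sqrt_neg[OF zero_less_one])
  moreover have "(?s - of_int 2) * ?z = of_int (-2) + of_int (-1) * ?s"
    by (simp add: field_simps sqrt_neg_mult_self sqrt_neg_mult_self_left)
  then have "(?s - of_int 2) * ?z \<in> OK 1" by (simp only: OK_of_int_sqrt_neg[OF zero_less_one])
  ultimately show "?s - of_int 2 \<in> pi_z 1 ?z" by (rule pi_z_memI)
qed simp_all

lemma dz_1_lower_bound:
  assumes "z \<in> K1 1 - roots_unity 1"
  shows "5 \<le> dz 1 z"
proof -
  have table: "\<forall>j\<in>{1, 2, 3, 4}. \<forall>a\<in>{..<9::nat}. \<forall>b\<in>{..<9::nat}.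
      a * a + 1 * b * b = 4 * j * j \<longrightarrow> j dvd a \<and> j dvd b"
    by (simp add: lessThan_nat_numeral lessThan_Suc)
  have "4 < dz 1 z"
  proof (rule dz_gt_if_solutions_divisible[OF _ squarefree_1 assms])
    fix j A B assume "1 \<le> j" "j \<le> 4" and eq: "A ^ 2 + int 1 * B ^ 2 = 4 * (int j) ^ 2"
    then have "j \<in> {1, 2, 3, 4}" by auto
    then show "int j dvd A \<and> int j dvd B"
      using table by (intro divisible_solutions_from_table[where N = 9 and M = 9, OF eq]) auto
  qed simp
  then show ?thesis by simp
qed

lemma F_1: "F 1 = 5"
  by (rule F_eq_if_attained[OF K1_1_witness dz_1_witness dz_1_lower_bound])

lemma K1_3_witness: "(1 + 4 * sqrt_neg 3) / 7 \<in> K1 3 - roots_unity 3"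
proof (rule not_OK_imp_K1_minus_roots_unity)
  show "(1 + 4 * sqrt_neg 3) / 7 \<in> QF 3" unfolding QF_iff
    by (rule bexI[of _ "1/7"], rule bexI[of _ "4/7"]) (simp_all add: field_simps)
  show "(1 + 4 * sqrt_neg 3) / 7 * cnj ((1 + 4 * sqrt_neg 3) / 7) = 1"
    by (simp add: field_simps sqrt_neg_mult_self sqrt_neg_mult_self_left)
  show "(1 + 4 * sqrt_neg 3) / 7 \<notin> OK 3"
    by (rule trace_not_Int_imp_not_OK[where p = 2 and q = 7]) (simp_all add: field_simps)
qed

text \<open>The witness is (2 + sqrt(-3)) / (2 - sqrt(-3)), so pi_z = (2 - sqrt(-3)), modulo which
  (1 + sqrt(-3)) / 2 = 5.\<close>
lemma dz_3_witness: "dz 3 ((1 + 4 * sqrt_neg 3) / 7) \<le> 7"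
  unfolding dz_def
proof (rule ideal_norm_le_if_residue[OF is_ideal_pi_z _ _ _ OK_3_Eisenstein_integer, where r = 5])
  let ?s = "sqrt_neg 3" and ?z = "(1 + 4 * sqrt_neg 3) / 7" and ?\<omega> = "(1 + sqrt_neg 3) / 2"
  have "of_nat 7 * ?z = of_int 1 + of_int 4 * ?s" by simp
  then have "of_nat 7 * ?z \<in> OK 3" by (simp only: OK_of_int_sqrt_neg[OF zero_less_numeral])
  then show "of_nat 7 \<in> pi_z 3 ?z" by (rule pi_z_memI[OF OK_of_nat])
  have "(of_int (-9) + of_int 1 * ?s) / 2 \<in> OK 3" "(of_int (-3) + of_int (-5) * ?s) / 2 \<in> OK 3"
    by (rule half_integral_OK, simp, simp add: dvd_eq_mod_eq_0)+
  moreover have "?\<omega> - of_int 5 = (of_int (-9) + of_int 1 * ?s) / 2"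
    "(?\<omega> - of_int 5) * ?z = (of_int (-3) + of_int (-5) * ?s) / 2"
    by (simp_all add: field_simps sqrt_neg_mult_self sqrt_neg_mult_self_left)
  ultimately show "?\<omega> - of_int 5 \<in> pi_z 3 ?z" by (intro pi_z_memI) (simp_all only:)
qed simp_all

lemma dz_3_lower_bound:
  assumes "z \<in> K1 3 - roots_unity 3"
  shows "7 \<le> dz 3 z"
proof -
  have table: "\<forall>j\<in>{1, 2, 3, 4, 5, 6}. \<forall>a\<in>{..<13::nat}. \<forall>b\<in>{..<7::nat}.
      a * a + 3 * b * b = 4 * j * j \<longrightarrow> j dvd a \<and> j dvd b"
    by (simp add: lessThan_nat_numeral lessThan_Suc)
  have "6 < dz 3 z"
  proof (rule dz_gt_if_solutions_divisible[OF _ squarefree_3 assms])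
    fix j A B assume "1 \<le> j" "j \<le> 6" and eq: "A ^ 2 + int 3 * B ^ 2 = 4 * (int j) ^ 2"
    then have "j \<in> {1, 2, 3, 4, 5, 6}" by auto
    then show "int j dvd A \<and> int j dvd B"
      using table by (intro divisible_solutions_from_table[where N = 13 and M = 7, OF eq]) auto
  qed simp
  then show ?thesis by simp
qed

lemma F_3: "F 3 = 7"
  by (rule F_eq_if_attained[OF K1_3_witness dz_3_witness dz_3_lower_bound])

theorem lemma28:
  fixes d :: nat
  assumes "d > 0" and "squarefree d"
  shows "F d = Inf (ideal_norm d ` JJ d) \<and> F 1 = 5 \<and> F 3 = 7"
  using F_eq_Inf_ideal_norm[OF assms] F_1 F_3 by blast

end
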